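(* Let $K$ be a (not necessarily associative) ring with identity $1_K$ and let $L$ be a field. Let $q\colon K\to L$ be a multiplicative quadratic map. Then one of the following holds: (1) there exist a composition algebra $M$ over $L$, with norm $N$, and a ring homomorphism $\varphi\colon K\to M$ such that $q(a)=N(\varphi(a))$ for all $a\in K$; (2) $\operatorname{char} L=2$ and $q$ is a ring homomorphism $K\to L$.
   Context: Let $K,L$ be (not necessarily associative) rings with identity. A map $q\colon K\to L$ is called a multiplicative quadratic map if (i) $q(ab)=q(a)q(b)$ for all $a,b\in K$; (ii) $q(n\cdot 1_K)=n^2\cdot 1_L$ for all $n\in\mathbb{Z}$; (iii) the map $f\colon K\times K\to L$, $f(a,b)=q(a+b)-q(a)-q(b)$, is biadditive. A composition algebra over a field $L$ is a unital, not necessarily associative, $L$-algebra $M$ together with a quadratic form $N\colon M\to L$ (its norm) whose associated bilinear form $N(x+y)-N(x)-N(y)$ is nondegenerate and which satisfies $N(xy)=N(x)N(y)$ for all $x,y\in M$. *)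

theory Defs
  imports "HOL-Algebra.Ring" "HOL-Algebra.Module"
begin

definition nonassoc_ring_1 :: "('a, 'b) ring_scheme \<Rightarrow> bool" where
  "nonassoc_ring_1 R \<longleftrightarrow>
     abelian_group R \<and>
     (\<forall>x\<in>carrier R. \<forall>y\<in>carrier R. x \<otimes>\<^bsub>R\<^esub> y \<in> carrier R) \<and>
     \<one>\<^bsub>R\<^esub> \<in> carrier R \<and>
     (\<forall>x\<in>carrier R. \<one>\<^bsub>R\<^esub> \<otimes>\<^bsub>R\<^esub> x = x \<and> x \<otimes>\<^bsub>R\<^esub> \<one>\<^bsub>R\<^esub> = x) \<and>
     (\<forall>x\<in>carrier R. \<forall>y\<in>carrier R. \<forall>z\<in>carrier R.
        (x \<oplus>\<^bsub>R\<^esub> y) \<otimes>\<^bsub>R\<^esub> z = x \<otimes>\<^bsub>R\<^esub> z \<oplus>\<^bsub>R\<^esub> y \<otimes>\<^bsub>R\<^esub> z \<and>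
        z \<otimes>\<^bsub>R\<^esub> (x \<oplus>\<^bsub>R\<^esub> y) = z \<otimes>\<^bsub>R\<^esub> x \<oplus>\<^bsub>R\<^esub> z \<otimes>\<^bsub>R\<^esub> y)"

definition mult_quadratic_map :: "('a, 'b) ring_scheme \<Rightarrow> ('a \<Rightarrow> 'l::field) \<Rightarrow> bool" where
  "mult_quadratic_map K q \<longleftrightarrow>
     (\<forall>a\<in>carrier K. \<forall>b\<in>carrier K. q (a \<otimes>\<^bsub>K\<^esub> b) = q a * q b) \<and>
     (\<forall>n::int. q ([n] \<cdot>\<^bsub>K\<^esub> \<one>\<^bsub>K\<^esub>) = of_int (n^2)) \<and>
     (let f = (\<lambda>a b. q (a \<oplus>\<^bsub>K\<^esub> b) - q a - q b) in
        (\<forall>a\<in>carrier K. \<forall>a'\<in>carrier K. \<forall>b\<in>carrier K.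
            f (a \<oplus>\<^bsub>K\<^esub> a') b = f a b + f a' b \<and>
            f b (a \<oplus>\<^bsub>K\<^esub> a') = f b a + f b a'))"

definition nonassoc_algebra :: "('l::field, 'm) module \<Rightarrow> bool" where
  "nonassoc_algebra M \<longleftrightarrow>
     nonassoc_ring_1 M \<and>
     (\<forall>c. \<forall>x\<in>carrier M. c \<odot>\<^bsub>M\<^esub> x \<in> carrier M) \<and>
     (\<forall>c d. \<forall>x\<in>carrier M. \<forall>y\<in>carrier M.
        c \<odot>\<^bsub>M\<^esub> (x \<oplus>\<^bsub>M\<^esub> y) = c \<odot>\<^bsub>M\<^esub> x \<oplus>\<^bsub>M\<^esub> c \<odot>\<^bsub>M\<^esub> y \<and>
        (c + d) \<odot>\<^bsub>M\<^esub> x = c \<odot>\<^bsub>M\<^esub> x \<oplus>\<^bsub>M\<^esub> d \<odot>\<^bsub>M\<^esub> x \<and>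
        (c * d) \<odot>\<^bsub>M\<^esub> x = c \<odot>\<^bsub>M\<^esub> (d \<odot>\<^bsub>M\<^esub> x) \<and>
        1 \<odot>\<^bsub>M\<^esub> x = x \<and>
        (c \<odot>\<^bsub>M\<^esub> x) \<otimes>\<^bsub>M\<^esub> y = c \<odot>\<^bsub>M\<^esub> (x \<otimes>\<^bsub>M\<^esub> y) \<and>
        x \<otimes>\<^bsub>M\<^esub> (c \<odot>\<^bsub>M\<^esub> y) = c \<odot>\<^bsub>M\<^esub> (x \<otimes>\<^bsub>M\<^esub> y))"

definition quadratic_form :: "('l::field, 'm) module \<Rightarrow> ('m \<Rightarrow> 'l) \<Rightarrow> bool" where
  "quadratic_form M N \<longleftrightarrow>
     (\<forall>c. \<forall>x\<in>carrier M. N (c \<odot>\<^bsub>M\<^esub> x) = c^2 * N x) \<and>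
     (let B = (\<lambda>x y. N (x \<oplus>\<^bsub>M\<^esub> y) - N x - N y) in
        \<forall>c. \<forall>x\<in>carrier M. \<forall>x'\<in>carrier M. \<forall>y\<in>carrier M.
          B (x \<oplus>\<^bsub>M\<^esub> x') y = B x y + B x' y \<and>
          B (c \<odot>\<^bsub>M\<^esub> x) y = c * B x y \<and>
          B y (x \<oplus>\<^bsub>M\<^esub> x') = B y x + B y x' \<and>
          B y (c \<odot>\<^bsub>M\<^esub> x) = c * B y x)"

definition composition_algebra :: "('l::field, 'm) module \<Rightarrow> ('m \<Rightarrow> 'l) \<Rightarrow> bool" where
  "composition_algebra M N \<longleftrightarrow>
     nonassoc_algebra M \<and> quadratic_form M N \<and>
     (\<forall>x\<in>carrier M. (\<forall>y\<in>carrier M. N (x \<oplus>\<^bsub>M\<^esub> y) - N x - N y = 0) \<longrightarrow> x = \<zero>\<^bsub>M\<^esub>) \<and>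
     (\<forall>x\<in>carrier M. \<forall>y\<in>carrier M. N (x \<otimes>\<^bsub>M\<^esub> y) = N x * N y)"

definition ring_hom_to_field :: "('a, 'b) ring_scheme \<Rightarrow> ('a \<Rightarrow> 'l::field) \<Rightarrow> bool" where
  "ring_hom_to_field K h \<longleftrightarrow>
     (\<forall>x\<in>carrier K. \<forall>y\<in>carrier K.
        h (x \<otimes>\<^bsub>K\<^esub> y) = h x * h y \<and> h (x \<oplus>\<^bsub>K\<^esub> y) = h x + h y) \<and>
     h \<one>\<^bsub>K\<^esub> = 1"

end

theory Submission
  imports Defs "HOL-Library.Function_Algebras"
begin

(* Let q : K -> L be a multiplicative quadratic map with polar form f(a,b) = q(a+b) - q a - q b.
   If L has characteristic 2 and f vanishes identically, q is additive and hence a ring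
   homomorphism.  Otherwise the composition algebra is built from K itself:
   (a) Formal L-linear combinations of elements of K carry a quadratic form extending q, its
       polar form, and a bilinear product extending that of K.  The identities for f obtained
       by linearising q(ab) = q(a) q(b) make the formal quadratic form multiplicative.
   (b) Dividing out the radical of the polar form -- realised by sending a formal combination
       v to the functional c |-> f(c, v) on K, an element of the function space K => L --
       gives a composition algebra Alg, and a |-> [a] is a ring homomorphism K -> Alg with
       q(a) = N([a]).  The norm is well defined because, outside the degenerate case, the
       radical is totally isotropic.
   (c) The statement asks for a composition algebra carried by nat => L.  By Hurwitz's
       argument (repeated Cayley-Dickson doubling inside a composition algebra) every
       composition algebra has a finite pair of dual bases, so coordinates embed it injectively
       into nat => L, and the structure can be transported along this embedding. *)


locale comp_alg =
  fixes C :: "'m::ab_group_add set" and sc :: "'l::field \<Rightarrow> 'm \<Rightarrow> 'm"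
    and mul :: "'m \<Rightarrow> 'm \<Rightarrow> 'm" and one :: 'm and N :: "'m \<Rightarrow> 'l"
  assumes zero_C: "0 \<in> C"
    and add_C: "x \<in> C \<Longrightarrow> y \<in> C \<Longrightarrow> x + y \<in> C"
    and sc_C: "x \<in> C \<Longrightarrow> sc c x \<in> C"
    and sc_add: "sc c (x + y) = sc c x + sc c y"
    and sc_add2: "sc (c + d) x = sc c x + sc d x"
    and sc_mult: "sc (c * d) x = sc c (sc d x)"
    and sc_one: "sc 1 x = x"
    and mul_C: "x \<in> C \<Longrightarrow> y \<in> C \<Longrightarrow> mul x y \<in> C"
    and one_C: "one \<in> C"
    and mul_add_l: "x \<in> C \<Longrightarrow> y \<in> C \<Longrightarrow> z \<in> C \<Longrightarrow> mul (x + y) z = mul x z + mul y z"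
    and mul_add_r: "x \<in> C \<Longrightarrow> y \<in> C \<Longrightarrow> z \<in> C \<Longrightarrow> mul z (x + y) = mul z x + mul z y"
    and mul_sc_l: "x \<in> C \<Longrightarrow> y \<in> C \<Longrightarrow> mul (sc c x) y = sc c (mul x y)"
    and mul_sc_r: "x \<in> C \<Longrightarrow> y \<in> C \<Longrightarrow> mul x (sc c y) = sc c (mul x y)"
    and one_l: "x \<in> C \<Longrightarrow> mul one x = x"
    and one_r: "x \<in> C \<Longrightarrow> mul x one = x"
    and N_sc: "x \<in> C \<Longrightarrow> N (sc c x) = c^2 * N x"
    and B_add_l: "x \<in> C \<Longrightarrow> x' \<in> C \<Longrightarrow> y \<in> C \<Longrightarrow>
        N (x + x' + y) - N (x + x') - N y = (N (x + y) - N x - N y) + (N (x' + y) - N x' - N y)"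
    and B_sc_l: "x \<in> C \<Longrightarrow> y \<in> C \<Longrightarrow>
        N (sc c x + y) - N (sc c x) - N y = c * (N (x + y) - N x - N y)"
    and N_mul: "x \<in> C \<Longrightarrow> y \<in> C \<Longrightarrow> N (mul x y) = N x * N y"
    and nondeg: "x \<in> C \<Longrightarrow> (\<forall>y\<in>C. N (x + y) - N x - N y = 0) \<Longrightarrow> x = 0"
    and N_one: "N one = 1"
begin

definition B where "B x y = N (x + y) - N x - N y"

lemma sc_zero[simp]: "sc 0 x = 0"
  using sc_add2[of 0 0 x] by simp
lemma sc_minus: "sc (- c) x = - sc c x"
  using sc_add2[of "-c" c x] by (simp add: eq_neg_iff_add_eq_0 add.commute)
lemma sc_zero2[simp]: "sc c 0 = 0"
  using sc_add[of c 0 0] by simp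
lemma sc_neg: "sc c (- x) = - sc c x"
  using sc_add[of c x "-x"] by (simp add: eq_neg_iff_add_eq_0 add.commute)
lemma sc_diff: "sc c (x - y) = sc c x - sc c y"
  using sc_add[of c x "-y"] sc_neg by simp
lemma sc_diff2: "sc (c - d) x = sc c x - sc d x"
  using sc_add2[of c "-d" x] sc_minus by simp

lemma neg_C: "x \<in> C \<Longrightarrow> - x \<in> C"
  using sc_C[of x "-1"] sc_minus[of 1 x] sc_one by simp
lemma diff_C: "x \<in> C \<Longrightarrow> y \<in> C \<Longrightarrow> x - y \<in> C"
  using add_C[of x "-y"] neg_C by simp

lemmas CI = zero_C add_C sc_C mul_C one_C neg_C diff_C
declare CI[simp]

lemma B_sym: "B x y = B y x"
  unfolding B_def by (simp add: add.commute)

lemma B_add1: "x \<in> C \<Longrightarrow> x' \<in> C \<Longrightarrow> y \<in> C \<Longrightarrow> B (x + x') y = B x y + B x' y"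
  unfolding B_def using B_add_l by simp
lemma B_add2: "x \<in> C \<Longrightarrow> x' \<in> C \<Longrightarrow> y \<in> C \<Longrightarrow> B y (x + x') = B y x + B y x'"
  using B_add1 B_sym by metis
lemma B_sc1: "x \<in> C \<Longrightarrow> y \<in> C \<Longrightarrow> B (sc c x) y = c * B x y"
  unfolding B_def using B_sc_l by simp
lemma B_sc2: "x \<in> C \<Longrightarrow> y \<in> C \<Longrightarrow> B y (sc c x) = c * B y x"
  using B_sc1 B_sym by metis
lemma B_zero1[simp]: "y \<in> C \<Longrightarrow> B 0 y = 0"
  using B_add1[of 0 0 y] by (metis add_cancel_left_right add_0 zero_C)
lemma B_neg1: "x \<in> C \<Longrightarrow> y \<in> C \<Longrightarrow> B (- x) y = - B x y"
  using B_add1[of x "-x" y] by (simp add: eq_neg_iff_add_eq_0 add.commute)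
lemma B_neg2: "x \<in> C \<Longrightarrow> y \<in> C \<Longrightarrow> B y (- x) = - B y x"
  using B_neg1 B_sym by metis
lemma B_diff1: "x \<in> C \<Longrightarrow> x' \<in> C \<Longrightarrow> y \<in> C \<Longrightarrow> B (x - x') y = B x y - B x' y"
  using B_add1[of x "-x'" y] B_neg1 by simp
lemma B_diff2: "x \<in> C \<Longrightarrow> x' \<in> C \<Longrightarrow> y \<in> C \<Longrightarrow> B y (x - x') = B y x - B y x'"
  using B_diff1 B_sym by metis

lemmas Bsimps = B_add1 B_add2 B_sc1 B_sc2 B_neg1 B_neg2 B_diff1 B_diff2

lemma N_zero[simp]: "N 0 = 0"
  using N_sc[of 0 0] by simp
lemma N_add: "N (x + y) = N x + N y + B x y"
  unfolding B_def by simp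
lemma B_self: "x \<in> C \<Longrightarrow> B x x = 2 * N x"
  using N_sc[of x 2] sc_add2[of 1 1 x] sc_one unfolding B_def by simp
lemma N_neg: "x \<in> C \<Longrightarrow> N (- x) = N x"
  using N_sc[of x "-1"] sc_minus[of 1 x] sc_one by simp

lemma mul_zero_l[simp]: "y \<in> C \<Longrightarrow> mul 0 y = 0"
  using mul_add_l[of 0 0 y] by simp
lemma mul_zero_r[simp]: "y \<in> C \<Longrightarrow> mul y 0 = 0"
  using mul_add_r[of 0 0 y] by simp
lemma mul_neg_l: "x \<in> C \<Longrightarrow> y \<in> C \<Longrightarrow> mul (- x) y = - mul x y"
  using mul_add_l[of x "-x" y] by (simp add: eq_neg_iff_add_eq_0 add.commute)
lemma mul_neg_r: "x \<in> C \<Longrightarrow> y \<in> C \<Longrightarrow> mul y (- x) = - mul y x"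
  using mul_add_r[of x "-x" y] by (simp add: eq_neg_iff_add_eq_0 add.commute)
lemma mul_diff_l: "x \<in> C \<Longrightarrow> x' \<in> C \<Longrightarrow> y \<in> C \<Longrightarrow> mul (x - x') y = mul x y - mul x' y"
  using mul_add_l[of x "-x'" y] mul_neg_l by simp
lemma mul_diff_r: "x \<in> C \<Longrightarrow> x' \<in> C \<Longrightarrow> y \<in> C \<Longrightarrow> mul y (x - x') = mul y x - mul y x'"
  using mul_add_r[of x "-x'" y] mul_neg_r by simp

lemmas Msimps = mul_add_l mul_add_r mul_sc_l mul_sc_r mul_neg_l mul_neg_r mul_diff_l mul_diff_r

lemma nondegB: "x \<in> C \<Longrightarrow> (\<And>y. y \<in> C \<Longrightarrow> B x y = 0) \<Longrightarrow> x = 0"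
  using nondeg unfolding B_def by blast

lemma polar_eq: "x \<in> C \<Longrightarrow> x' \<in> C \<Longrightarrow> (\<And>y. y \<in> C \<Longrightarrow> B x y = B x' y) \<Longrightarrow> x = x'"
  using nondegB[of "x - x'"] by (simp add: B_diff1)

(* Linearising N(xy) = N x N y in y (resp. x): multiplication by x scales B by N x. *)
lemma polar_mul_left:
  assumes "x \<in> C" "y \<in> C" "z \<in> C" shows "B (mul x y) (mul x z) = N x * B y z"
  using N_mul[of x "y + z"] assms by (simp add: mul_add_r N_add N_mul algebra_simps)
lemma polar_mul_right:
  assumes "x \<in> C" "y \<in> C" "z \<in> C" shows "B (mul x z) (mul y z) = N z * B x y"
  using N_mul[of "x + y" z] assms by (simp add: mul_add_l N_add N_mul algebra_simps)

lemma polar_mul_left_lin: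
  assumes C: "x \<in> C" "y \<in> C" "z \<in> C" "w \<in> C"
  shows "B (mul x y) (mul w z) + B (mul x z) (mul w y) = B x w * B y z"
  using polar_mul_left[of "x + w" y z] C
  by (simp add: mul_add_l Bsimps polar_mul_left N_add algebra_simps B_sym)
lemma polar_mul_right_lin:
  assumes C: "x \<in> C" "y \<in> C" "z \<in> C" "w \<in> C"
  shows "B (mul y x) (mul z w) + B (mul y w) (mul z x) = B y z * B x w"
  using polar_mul_right[of y z "x + w"] C
  by (simp add: mul_add_r Bsimps polar_mul_right N_add algebra_simps B_sym)

definition T where "T x = B x one"
definition bar where "bar x = sc (T x) one - x"

lemma bar_C: "x \<in> C \<Longrightarrow> bar x \<in> C"
  unfolding bar_def by simp
lemma T_one: "T one = 2"
  unfolding T_def using B_self[OF one_C] N_one by simp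
lemma T_bar: "x \<in> C \<Longrightarrow> T (bar x) = T x"
  unfolding T_def bar_def using T_one[unfolded T_def] by (simp add: Bsimps)
lemma bar_bar: "x \<in> C \<Longrightarrow> bar (bar x) = x"
  using T_bar unfolding bar_def by simp
lemma bar_add: "x \<in> C \<Longrightarrow> y \<in> C \<Longrightarrow> bar (x + y) = bar x + bar y"
  unfolding bar_def T_def by (simp add: Bsimps sc_add2)
lemma mul_bar_l: "x \<in> C \<Longrightarrow> z \<in> C \<Longrightarrow> mul (bar x) z = sc (T x) z - mul x z"
  unfolding bar_def by (simp add: Msimps one_l)
lemma mul_bar_r: "x \<in> C \<Longrightarrow> z \<in> C \<Longrightarrow> mul z (bar x) = sc (T x) z - mul z x"
  unfolding bar_def by (simp add: Msimps one_r)

lemma polar_adj_left: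
  assumes C: "x \<in> C" "y \<in> C" "z \<in> C" shows "B (mul x y) z = B y (mul (bar x) z)"
  using polar_mul_left_lin[of x y z one] C
  by (simp add: one_l mul_bar_l Bsimps T_def B_sym[of "mul x z"] eq_diff_eq)
lemma polar_adj_right:
  assumes C: "x \<in> C" "y \<in> C" "z \<in> C" shows "B (mul y x) z = B y (mul z (bar x))"
  using polar_mul_right_lin[of x y z one] C
  by (simp add: one_r mul_bar_r Bsimps T_def eq_diff_eq)

lemma bar_mul_cancel: "x \<in> C \<Longrightarrow> y \<in> C \<Longrightarrow> mul (bar x) (mul x y) = sc (N x) y"
proof (rule polar_eq)
  fix z assume C: "x \<in> C" "y \<in> C" "z \<in> C"
  have "B (mul (bar x) (mul x y)) z = B (mul x y) (mul x z)"
    using polar_adj_left[of "bar x" "mul x y" z] C bar_C bar_bar by simp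
  also have "\<dots> = B (sc (N x) y) z" using polar_mul_left C by (simp add: Bsimps)
  finally show "B (mul (bar x) (mul x y)) z = B (sc (N x) y) z" .
qed (auto simp: bar_C)
lemma mul_bar_cancel: "x \<in> C \<Longrightarrow> y \<in> C \<Longrightarrow> mul (mul y x) (bar x) = sc (N x) y"
proof (rule polar_eq)
  fix z assume C: "x \<in> C" "y \<in> C" "z \<in> C"
  have "B (mul (mul y x) (bar x)) z = B (mul y x) (mul z x)"
    using polar_adj_right[of "bar x" "mul y x" z] C bar_C bar_bar by simp
  also have "\<dots> = B (sc (N x) y) z" using polar_mul_right C by (simp add: Bsimps)
  finally show "B (mul (mul y x) (bar x)) z = B (sc (N x) y) z" .
qed (auto simp: bar_C)

lemma bar_mul_lin:
  assumes C: "x \<in> C" "y \<in> C" "z \<in> C"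
  shows "mul (bar x) (mul z y) + mul (bar z) (mul x y) = sc (B x z) y"
  using bar_mul_cancel[of "x + z" y] C bar_mul_cancel[of x y] bar_mul_cancel[of z y]
  by (simp add: bar_add Msimps bar_C N_add sc_add2 algebra_simps)
lemma mul_bar_lin:
  assumes C: "x \<in> C" "y \<in> C" "z \<in> C"
  shows "mul (mul y x) (bar z) + mul (mul y z) (bar x) = sc (B x z) y"
  using mul_bar_cancel[of "x + z" y] C mul_bar_cancel[of x y] mul_bar_cancel[of z y]
  by (simp add: bar_add Msimps bar_C N_add sc_add2 algebra_simps)

lemma square_eq: "x \<in> C \<Longrightarrow> mul x x = sc (T x) x - sc (N x) one"
  using bar_mul_cancel[of x one] by (simp add: one_r mul_bar_l algebra_simps)

lemma T_add: "x \<in> C \<Longrightarrow> y \<in> C \<Longrightarrow> T (x + y) = T x + T y"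
  unfolding T_def by (simp add: Bsimps)

lemma anticomm_eq:
  assumes C: "x \<in> C" "y \<in> C"
  shows "mul x y + mul y x = sc (T x) y + sc (T y) x - sc (B x y) one"
  using square_eq[of "x + y"] C square_eq[of x] square_eq[of y]
  by (simp add: Msimps T_add N_add sc_add2 sc_add algebra_simps)

lemma T_mul:
  assumes C: "x \<in> C" "y \<in> C" shows "T (mul x y) = T x * T y - B x y"
proof -
  have "T (mul x y) = B y (mul (bar x) one)" unfolding T_def using polar_adj_left C by simp
  also have "\<dots> = T x * T y - B x y" using C unfolding bar_def
    by (simp add: one_r Bsimps T_def B_sym)
  finally show ?thesis .
qed

lemma bar_mul:
  assumes C: "x \<in> C" "y \<in> C" shows "bar (mul x y) = mul (bar y) (bar x)"
proof -
  have lq: "mul y x = sc (T x) y + sc (T y) x - sc (B x y) one - mul x y"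
    using anticomm_eq C by (simp add: algebra_simps)
  show ?thesis using C unfolding bar_def
    by (simp add: T_mul Msimps one_l one_r lq sc_diff2 sc_diff sc_mult algebra_simps)
qed

lemma N_bar:
  assumes C: "x \<in> C" shows "N (bar x) = N x"
proof -
  have "N (bar x) = N (sc (T x) one) + N (- x) + B (sc (T x) one) (- x)"
    unfolding bar_def using N_add[of "sc (T x) one" "- x"] by simp
  then show ?thesis using C by (simp add: N_sc N_one N_neg Bsimps T_def B_sym power2_eq_square)
qed


definition subalg where
  "subalg S \<longleftrightarrow> S \<subseteq> C \<and> one \<in> S \<and> (\<forall>x\<in>S. \<forall>y\<in>S. x + y \<in> S \<and> mul x y \<in> S)
     \<and> (\<forall>c. \<forall>x\<in>S. sc c x \<in> S)"

definition orth where "orth S a \<longleftrightarrow> (\<forall>s\<in>S. B a s = 0)"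

context
  fixes S assumes S: "subalg S"
begin
lemma S_C: "x \<in> S \<Longrightarrow> x \<in> C" using S unfolding subalg_def by blast
lemma S_add: "x \<in> S \<Longrightarrow> y \<in> S \<Longrightarrow> x + y \<in> S" using S unfolding subalg_def by blast
lemma S_mul: "x \<in> S \<Longrightarrow> y \<in> S \<Longrightarrow> mul x y \<in> S" using S unfolding subalg_def by blast
lemma S_sc: "x \<in> S \<Longrightarrow> sc c x \<in> S" using S unfolding subalg_def by blast
lemma S_one: "one \<in> S" using S unfolding subalg_def by blast
lemma S_zero: "0 \<in> S" using S_sc[OF S_one, of 0] by simp
lemma S_neg: "x \<in> S \<Longrightarrow> - x \<in> S" using S_sc[of x "-1"] sc_minus[of 1 x] sc_one by simp
lemma S_diff: "x \<in> S \<Longrightarrow> y \<in> S \<Longrightarrow> x - y \<in> S" using S_add[of x "-y"] S_neg by simp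
lemma S_bar: "x \<in> S \<Longrightarrow> bar x \<in> S" unfolding bar_def by (simp add: S_diff S_sc S_one)
lemmas SI = S_add S_mul S_sc S_one S_zero S_neg S_diff S_bar

(* Multiplication rules in S + S a for an element a orthogonal to the subalgebra S;
   they show that S + S a is the Cayley-Dickson double of S. *)
context fixes a assumes aC: "a \<in> C" and ao: "orth S a"
begin
lemma T_a: "T a = 0" using ao S_one unfolding orth_def T_def by blast
lemma bar_a: "bar a = - a" unfolding bar_def by (simp add: T_a)
lemma orth_mul_polar: "x \<in> S \<Longrightarrow> y \<in> S \<Longrightarrow> B (mul y a) x = 0"
  using polar_adj_left[of y a x] ao aC S_C SI unfolding orth_def by simp
lemma orth_mul_polar2: "x \<in> S \<Longrightarrow> y \<in> S \<Longrightarrow> B x (mul y a) = 0"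
  using orth_mul_polar B_sym by metis

lemma orth_mul_comm:
  assumes x: "x \<in> S" shows "mul a x = mul (bar x) a"
proof -
  have "B x a = 0" using ao x B_sym unfolding orth_def by metis
  then have "mul x a + mul a x = sc (T x) a" using anticomm_eq[of x a] x S_C aC T_a by simp
  then show ?thesis using x S_C aC by (simp add: mul_bar_l algebra_simps)
qed

lemma double_mul_left:
  assumes x: "x \<in> S" and y: "y \<in> S" shows "mul x (mul y a) = mul (mul y x) a"
proof -
  have "B (bar x) a = 0" using ao SI x B_sym unfolding orth_def by metis
  then have "mul x (mul a (bar y)) + mul (bar a) (mul (bar x) (bar y)) = 0"
    using bar_mul_lin[of "bar x" "bar y" a] x y S_C SI aC bar_bar by simp
  then have "mul x (mul a (bar y)) = mul a (mul (bar x) (bar y))"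
    using x y S_C SI aC by (simp add: bar_a mul_neg_l)
  also have "\<dots> = mul (bar (mul (bar x) (bar y))) a" using orth_mul_comm SI x y by simp
  also have "\<dots> = mul (mul y x) a" using bar_mul x y S_C SI bar_bar by simp
  finally show ?thesis using orth_mul_comm[of "bar y"] SI y bar_bar S_C by simp
qed

lemma double_mul_right:
  assumes y: "y \<in> S" and z: "z \<in> S" shows "mul (mul y a) z = mul (mul y (bar z)) a"
proof -
  have "B a (bar z) = 0" using ao SI z unfolding orth_def by metis
  then have "mul (mul y a) z + mul (mul y (bar z)) (bar a) = 0"
    using mul_bar_lin[of a y "bar z"] y z S_C SI aC bar_bar by simp
  then show ?thesis using y z S_C SI aC by (simp add: bar_a mul_neg_r eq_neg_iff_add_eq_0)
qed

lemma mul_a_a: "u \<in> C \<Longrightarrow> mul a (mul a u) = - sc (N a) u"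
  using bar_mul_cancel[of a u] aC by (simp add: bar_a mul_neg_l minus_equation_iff)

lemma double_mul_both:
  assumes y: "y \<in> S" and w: "w \<in> S"
  shows "mul (mul y a) (mul w a) = - sc (N a) (mul (bar w) y)"
proof -
  note C = S_C[OF y] S_C[OF w] aC S_C[OF S_bar[OF y]] S_C[OF S_bar[OF w]]
  have Tya: "T (mul y a) = 0" unfolding T_def using orth_mul_polar S_one y by blast
  have bya: "bar (mul y a) = - mul y a" unfolding bar_def Tya by simp
  have e1: "mul a (bar w) = mul w a" using orth_mul_comm[of "bar w"] w SI bar_bar C by simp
  have e2: "mul (mul y a) (bar w) = mul (mul y w) a"
    using double_mul_right[of y "bar w"] y w SI bar_bar C by simp
  have e3: "mul (mul y w) a = mul a (bar (mul y w))"
    using orth_mul_comm[of "bar (mul y w)"] y w SI bar_bar C by simp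
  have e4: "B (mul y a) a = N a * T y"
    using polar_mul_right[of y one a] C one_l unfolding T_def by simp
  have "mul (bar (mul y a)) (mul a (bar w)) + mul (bar a) (mul (mul y a) (bar w))
        = sc (B (mul y a) a) (bar w)"
    using bar_mul_lin[of "mul y a" "bar w" a] C by simp
  then have "- mul (mul y a) (mul w a) + sc (N a) (bar (mul y w)) = sc (N a * T y) (bar w)"
    using C by (simp add: bya e1 e2 e3 bar_a mul_neg_l mul_a_a bar_C e4)
  then have "mul (mul y a) (mul w a) = sc (N a) (mul (bar w) (bar y)) - sc (N a * T y) (bar w)"
    using C by (simp add: bar_mul algebra_simps)
  then show ?thesis using C by (simp add: mul_bar_r sc_diff sc_mult)
qed

lemma cayley_dickson_mul:
  assumes S: "x \<in> S" "y \<in> S" "z \<in> S" "w \<in> S"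
  shows "mul (x + mul y a) (z + mul w a) =
    (mul x z - sc (N a) (mul (bar w) y)) + mul (mul w x + mul y (bar z)) a"
proof -
  note C = S_C[OF S(1)] S_C[OF S(2)] S_C[OF S(3)] S_C[OF S(4)] aC S_C[OF S_bar[OF S(3)]]
  have "mul (x + mul y a) (z + mul w a)
      = mul x z + mul x (mul w a) + (mul (mul y a) z + mul (mul y a) (mul w a))"
    using C by (simp add: mul_add_l mul_add_r add.assoc)
  also have "\<dots> = mul x z + mul (mul w x) a + (mul (mul y (bar z)) a - sc (N a) (mul (bar w) y))"
    using S by (simp add: double_mul_left double_mul_right double_mul_both)
  also have "\<dots> = (mul x z - sc (N a) (mul (bar w) y)) + mul (mul w x + mul y (bar z)) a"
    using C by (simp add: mul_add_l)
  finally show ?thesis .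
qed

lemma N_cayley_dickson: "x \<in> S \<Longrightarrow> y \<in> S \<Longrightarrow> N (x + mul y a) = N x + N y * N a"
  using orth_mul_polar2[of x y] by (simp add: N_add N_mul S_C aC)

(* Multiplicativity of the norm on the double forces associativity of S, tested against B:
   expanding N((x + y a)(z + w a)) and comparing with N(x + y a) N(z + w a). *)
lemma double_assoc_polar:
  assumes S: "x \<in> S" "y \<in> S" "z \<in> S" "w \<in> S" and Na: "N a \<noteq> 0"
  shows "B (mul (mul w x) z) y = B (mul w (mul x z)) y"
proof -
  note C = S_C[OF S(1)] S_C[OF S(2)] S_C[OF S(3)] S_C[OF S(4)] aC S_C[OF S_bar[OF S(3)]]
    S_C[OF S_bar[OF S(4)]]
  define p where "p = mul x z - sc (N a) (mul (bar w) y)"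
  define r where "r = mul w x + mul y (bar z)"
  have pS: "p \<in> S" and rS: "r \<in> S" unfolding p_def r_def using S SI by auto
  have "N (mul (x + mul y a) (z + mul w a)) = N (x + mul y a) * N (z + mul w a)"
    using N_mul C by simp
  also have "mul (x + mul y a) (z + mul w a) = p + mul r a"
    using cayley_dickson_mul[OF S(1,2,3,4)] unfolding p_def r_def .
  finally have e0: "N p + N r * N a = (N x + N y * N a) * (N z + N w * N a)"
    using N_cayley_dickson S pS rS by simp
  have "N p = N (mul x z) + N (- sc (N a) (mul (bar w) y))
              + B (mul x z) (- sc (N a) (mul (bar w) y))"
    unfolding p_def using N_add[of "mul x z" "- sc (N a) (mul (bar w) y)"] by simp
  also have "\<dots> = N x * N z + (N a)^2 * (N w * N y) - N a * B (mul x z) (mul (bar w) y)"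
    using C by (simp add: N_neg N_sc N_mul N_bar B_neg2 B_sc2)
  finally have e1: "N p = N x * N z + (N a)^2 * (N w * N y) - N a * B (mul x z) (mul (bar w) y)" .
  have e2: "N r = N w * N x + N y * N z + B (mul w x) (mul y (bar z))"
    unfolding r_def using C by (simp add: N_add N_mul N_bar)
  have "N a * (B (mul w x) (mul y (bar z)) - B (mul x z) (mul (bar w) y)) = 0"
    using e0 unfolding e1 e2 by (simp add: algebra_simps power2_eq_square)
  then have "B (mul w x) (mul y (bar z)) = B (mul x z) (mul (bar w) y)" using Na by simp
  moreover have "B (mul (mul w x) z) y = B (mul w x) (mul y (bar z))"
    using polar_adj_right C by simp
  moreover have "B (mul w (mul x z)) y = B (mul x z) (mul (bar w) y)"
    using polar_adj_left C by simp
  ultimately show ?thesis by simp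
qed
end
end

lemma sum_C: "(\<forall>i\<in>I. g i \<in> C) \<Longrightarrow> sum g I \<in> C"
  by (induction I rule: infinite_finite_induct) auto
lemma S_sum: "subalg S \<Longrightarrow> (\<forall>i\<in>I. g i \<in> S) \<Longrightarrow> sum g I \<in> S"
  by (induction I rule: infinite_finite_induct) (auto intro: S_zero S_add)

lemma B_sum1: "(\<forall>i\<in>I. g i \<in> C) \<Longrightarrow> y \<in> C \<Longrightarrow> B (sum g I) y = (\<Sum>i\<in>I. B (g i) y)"
  by (induction I rule: infinite_finite_induct) (auto simp: B_add1 sum_C)
lemma B_sum2: "(\<forall>i\<in>I. g i \<in> C) \<Longrightarrow> y \<in> C \<Longrightarrow> B y (sum g I) = (\<Sum>i\<in>I. B y (g i))"
  by (subst B_sym, subst B_sum1) (auto simp: B_sym)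
lemma mul_sum_l: "(\<forall>i\<in>I. g i \<in> C) \<Longrightarrow> y \<in> C \<Longrightarrow> mul (sum g I) y = (\<Sum>i\<in>I. mul (g i) y)"
  by (induction I rule: infinite_finite_induct) (auto simp: mul_add_l sum_C)

lemma sum_split: "sum g {..<m + (k::nat)} = sum g {..<m} + (\<Sum>j<k. g (m + j))"
  by (induction k) (auto simp: add.assoc)

definition expand where "expand x ds es = (\<Sum>i<length ds. sc (B x (es ! i)) (ds ! i))"

definition dual_basis where
  "dual_basis S ds es \<longleftrightarrow> subalg S \<and> set ds \<subseteq> S \<and> set es \<subseteq> S \<and> length ds = length es \<and>
     (\<forall>x\<in>S. x = expand x ds es) \<and> (\<forall>x\<in>S. x = expand x es ds)"

context fixes S ds es assumes DB: "dual_basis S ds es"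
begin
lemma DB_subalg: "subalg S" using DB unfolding dual_basis_def by blast
lemma DB_len: "length es = length ds" using DB unfolding dual_basis_def by simp
lemma DB_ds: "i < length ds \<Longrightarrow> ds ! i \<in> S" using DB unfolding dual_basis_def by auto
lemma DB_es: "i < length ds \<Longrightarrow> es ! i \<in> S" using DB unfolding dual_basis_def by auto
lemma DB_expand1: "x \<in> S \<Longrightarrow> x = expand x ds es" using DB unfolding dual_basis_def by blast
lemma DB_expand2: "x \<in> S \<Longrightarrow> x = expand x es ds" using DB unfolding dual_basis_def by blast
lemma DB_dsC: "i < length ds \<Longrightarrow> ds ! i \<in> C" using DB_ds S_C[OF DB_subalg] by blast
lemma DB_esC: "i < length ds \<Longrightarrow> es ! i \<in> C" using DB_es S_C[OF DB_subalg] by blast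

lemma expand_mem: "expand x ds es \<in> S"
  unfolding expand_def by (rule S_sum[OF DB_subalg]) (simp add: S_sc[OF DB_subalg] DB_ds)

lemma DB_eq:
  assumes t: "t \<in> S" "t' \<in> S" and h: "\<And>s. s \<in> S \<Longrightarrow> B t s = B t' s"
  shows "t = t'"
proof -
  have "B (t - t') (es ! i) = 0" if "i < length ds" for i
    using h[OF DB_es[OF that]] t DB_esC[OF that] S_C[OF DB_subalg] by (simp add: B_diff1)
  then have "expand (t - t') ds es = 0" unfolding expand_def by simp
  then show ?thesis using DB_expand1[of "t - t'"] S_diff[OF DB_subalg t] by simp
qed

lemma proj_orth:
  assumes x: "x \<in> C" shows "orth S (x - expand x ds es)"
  unfolding orth_def
proof
  fix s assume s: "s \<in> S"
  have sC: "s \<in> C" using s S_C[OF DB_subalg] by blast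
  have "B x s = B x (expand s es ds)" using DB_expand2 s by simp
  also have "\<dots> = (\<Sum>i<length ds. B s (ds ! i) * B x (es ! i))"
    unfolding expand_def DB_len using x DB_dsC DB_esC by (simp add: B_sum2 B_sc2)
  finally have 1: "B x s = (\<Sum>i<length ds. B s (ds ! i) * B x (es ! i))" .
  have "B (expand x ds es) s = (\<Sum>i<length ds. B x (es ! i) * B (ds ! i) s)"
    unfolding expand_def using sC DB_dsC DB_esC by (simp add: B_sum1 B_sc1)
  also have "\<dots> = (\<Sum>i<length ds. B s (ds ! i) * B x (es ! i))"
    by (rule sum.cong) (auto simp: B_sym[of s] mult.commute)
  finally have 2: "B (expand x ds es) s = (\<Sum>i<length ds. B s (ds ! i) * B x (es ! i))" .
  show "B (x - expand x ds es) s = 0"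
    using 1 2 x sC expand_mem S_C[OF DB_subalg] by (simp add: B_diff1)
qed

lemma orth_polar_nonzero:
  assumes "S \<noteq> C"
  shows "\<exists>y\<in>C. \<exists>z\<in>C. orth S y \<and> orth S z \<and> B y z \<noteq> 0"
proof -
  note ES = S_C[OF DB_subalg expand_mem]
  obtain x where x: "x \<in> C" "x \<notin> S" using assms S_C[OF DB_subalg] by blast
  define y where "y = x - expand x ds es"
  have yC: "y \<in> C" and oy: "orth S y" unfolding y_def using proj_orth x ES by auto
  have "y \<noteq> 0" using x(2) expand_mem[of x] unfolding y_def by (metis right_minus_eq)
  then obtain u where u: "u \<in> C" "B y u \<noteq> 0" using nondegB[OF yC] by blast
  define z where "z = u - expand u ds es"
  have zC: "z \<in> C" and oz: "orth S z" unfolding z_def using proj_orth u ES by auto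
  have "B y (expand u ds es) = 0" using oy expand_mem unfolding orth_def by blast
  then have "B y z = B y u" unfolding z_def using B_diff2[OF u(1) ES yC] by simp
  then show ?thesis using yC zC oy oz u(2) by metis
qed

(* Hence some element orthogonal to a proper S is anisotropic: one of y, z, y + z. *)
lemma orth_anisotropic:
  assumes "S \<noteq> C" shows "\<exists>a\<in>C. orth S a \<and> N a \<noteq> 0"
proof -
  obtain y z where yz: "y \<in> C" "z \<in> C" "orth S y" "orth S z" "B y z \<noteq> 0"
    using orth_polar_nonzero[OF assms] by blast
  have "orth S (y + z)"
    using yz S_C[OF DB_subalg] unfolding orth_def by (simp add: B_add1)
  moreover have "N y \<noteq> 0 \<or> N z \<noteq> 0 \<or> N (y + z) \<noteq> 0" using yz N_add[of y z] by auto
  ultimately show ?thesis using yz by (metis add_C)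
qed
end

definition double where "double S a = {x + mul y a | x y. x \<in> S \<and> y \<in> S}"
definition double_list where "double_list c ds a = ds @ map (\<lambda>d. sc c (mul d a)) ds"

lemma double_mem: "x \<in> S \<Longrightarrow> y \<in> S \<Longrightarrow> x + mul y a \<in> double S a"
  unfolding double_def by blast
lemma double_base: "subalg S \<Longrightarrow> a \<in> C \<Longrightarrow> x \<in> S \<Longrightarrow> x \<in> double S a"
  using double_mem[of x S 0 a] S_zero[of S] by simp
lemma double_gen: "subalg S \<Longrightarrow> a \<in> C \<Longrightarrow> a \<in> double S a"
  using double_mem[of 0 S one a] S_zero[of S] S_one[of S] one_l by simp

lemma subalg_double:
  assumes S: "subalg S" and aC: "a \<in> C" and ao: "orth S a"
  shows "subalg (double S a)"
  unfolding subalg_def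
proof (intro conjI ballI allI)
  note SC = S_C[OF S]
  show "double S a \<subseteq> C" unfolding double_def using SC aC by auto
  show "one \<in> double S a" using double_base[OF S aC S_one[OF S]] .
  fix u v assume u: "u \<in> double S a" and v: "v \<in> double S a"
  obtain x y where xy: "x \<in> S" "y \<in> S" "u = x + mul y a" using u unfolding double_def by blast
  obtain z w where zw: "z \<in> S" "w \<in> S" "v = z + mul w a" using v unfolding double_def by blast
  have "u + v = (x + z) + mul (y + w) a" using xy zw SC aC by (simp add: mul_add_l algebra_simps)
  then show "u + v \<in> double S a"
    using double_mem[OF S_add[OF S xy(1) zw(1)] S_add[OF S xy(2) zw(2)]] by simp
  show "mul u v \<in> double S a" unfolding xy zw cayley_dickson_mul[OF S aC ao xy(1,2) zw(1,2)]
    by (rule double_mem) (use S xy zw in \<open>auto intro: SI\<close>)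
next
  fix c u assume u: "u \<in> double S a"
  obtain x y where xy: "x \<in> S" "y \<in> S" "u = x + mul y a" using u unfolding double_def by blast
  have "sc c u = sc c x + mul (sc c y) a" using xy S_C[OF S] aC by (simp add: sc_add mul_sc_l)
  then show "sc c u \<in> double S a" using double_mem[OF S_sc[OF S xy(1)] S_sc[OF S xy(2)]] by simp
qed

lemma double_list_subset:
  assumes S: "subalg S" and aC: "a \<in> C" and ds: "set ds \<subseteq> S"
  shows "set (double_list c ds a) \<subseteq> double S a"
proof -
  have "sc c (mul d a) \<in> double S a" if "d \<in> S" for d
    using double_mem[OF S_zero[OF S] S_sc[OF S that, of c], of a] that aC S_C[OF S]
    by (simp add: mul_sc_l)
  then show ?thesis using ds double_base[OF S aC] unfolding double_list_def by auto
qed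

lemma expand_double:
  assumes S: "subalg S" and aC: "a \<in> C" and ao: "orth S a"
    and ps: "set ps \<subseteq> S" and qs: "set qs \<subseteq> S" and len: "length qs = length ps"
    and x: "x \<in> S" and y: "y \<in> S" and ab: "\<alpha> * \<beta> * N a = 1"
  shows "expand (x + mul y a) (double_list \<alpha> ps a) (double_list \<beta> qs a)
       = expand x ps qs + mul (expand y ps qs) a"
proof -
  note SC = S_C[OF S]
  define n where "n = length ps"
  have p: "ps ! i \<in> S" and q: "qs ! i \<in> S" if "i < n" for i
    using ps qs len that unfolding n_def by auto
  have b1: "B (x + mul y a) (qs ! i) = B x (qs ! i)" if "i < n" for i
    using x y q[OF that] orth_mul_polar[OF S aC ao, of "qs ! i" y] SC aC by (simp add: B_add1)
  have b2: "sc (B (x + mul y a) (sc \<beta> (mul (qs ! i) a))) (sc \<alpha> (mul (ps ! i) a))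
          = sc (B y (qs ! i)) (mul (ps ! i) a)" if "i < n" for i
  proof -
    have "B (x + mul y a) (sc \<beta> (mul (qs ! i) a)) = \<beta> * (N a * B y (qs ! i))"
      using x y q[OF that] orth_mul_polar2[OF S aC ao, of x "qs ! i"] SC aC
        polar_mul_right[of y "qs ! i" a] by (simp add: B_add1 B_sc2)
    moreover have "\<beta> * (N a * c) * \<alpha> = c" for c
      using ab by (metis mult.assoc mult.commute mult_1)
    ultimately show ?thesis by (metis sc_mult)
  qed
  define P where "P = double_list \<alpha> ps a"
  define Q where "Q = double_list \<beta> qs a"
  have lenP: "length P = n + n" unfolding P_def double_list_def n_def by simp
  have s1: "(\<Sum>i<n. sc (B (x + mul y a) (Q ! i)) (P ! i)) = (\<Sum>i<n. sc (B x (qs ! i)) (ps ! i))"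
    by (rule sum.cong) (simp_all add: P_def Q_def double_list_def nth_append len n_def b1)
  have s2: "(\<Sum>i<n. sc (B (x + mul y a) (Q ! (n + i))) (P ! (n + i)))
          = (\<Sum>i<n. sc (B y (qs ! i)) (mul (ps ! i) a))"
    by (rule sum.cong) (simp_all add: P_def Q_def double_list_def nth_append len n_def b2)
  have "expand (x + mul y a) (double_list \<alpha> ps a) (double_list \<beta> qs a)
      = (\<Sum>i<n. sc (B x (qs ! i)) (ps ! i)) + (\<Sum>i<n. sc (B y (qs ! i)) (mul (ps ! i) a))"
    unfolding expand_def P_def[symmetric] Q_def[symmetric] lenP sum_split s1 s2 ..
  also have "(\<Sum>i<n. sc (B y (qs ! i)) (mul (ps ! i) a)) = mul (expand y ps qs) a"
    unfolding expand_def n_def[symmetric] using p SC aC y by (simp add: mul_sum_l mul_sc_l)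
  finally show ?thesis unfolding expand_def n_def .
qed

lemma dual_basis_double:
  assumes DB: "dual_basis S ds es" and aC: "a \<in> C" and ao: "orth S a" and Na: "N a \<noteq> 0"
  shows "dual_basis (double S a) (double_list 1 ds a) (double_list (inverse (N a)) es a)"
proof -
  have S: "subalg S" and ds: "set ds \<subseteq> S" and es: "set es \<subseteq> S"
    and len: "length es = length ds" using DB unfolding dual_basis_def by auto
  have "u = expand u (double_list 1 ds a) (double_list (inverse (N a)) es a)
      \<and> u = expand u (double_list (inverse (N a)) es a) (double_list 1 ds a)"
    if u: "u \<in> double S a" for u
  proof -
    obtain x y where xy: "x \<in> S" "y \<in> S" "u = x + mul y a" using u unfolding double_def by blast
    show ?thesis
      using expand_double[OF S aC ao ds es len xy(1,2), of 1 "inverse (N a)"]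
        expand_double[OF S aC ao es ds len[symmetric] xy(1,2), of "inverse (N a)" 1]
        DB_expand1[OF DB] DB_expand2[OF DB] xy Na by simp
  qed
  then show ?thesis unfolding dual_basis_def
    using subalg_double[OF S aC ao] double_list_subset[OF S aC] ds es len
    by (auto simp: double_list_def)
qed

(* If S has dual bases and admits an anisotropic orthogonal element, then S is
   associative (its double being a composition subalgebra). *)
lemma dual_basis_assoc:
  assumes DB: "dual_basis S ds es" and aC: "a \<in> C" and ao: "orth S a" and Na: "N a \<noteq> 0"
    and w: "w \<in> S" and x: "x \<in> S" and z: "z \<in> S"
  shows "mul (mul w x) z = mul w (mul x z)"
proof (rule DB_eq[OF DB])
  have S: "subalg S" using DB_subalg[OF DB] .
  show "mul (mul w x) z \<in> S" "mul w (mul x z) \<in> S" using S w x z by (auto intro: SI)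
  fix y assume "y \<in> S"
  then show "B (mul (mul w x) z) y = B (mul w (mul x z)) y"
    using double_assoc_polar[OF S aC ao x _ z w Na] by simp
qed

lemma mul_anisotropic_cancel:
  assumes t: "t \<in> C" and aC: "a \<in> C" and Na: "N a \<noteq> 0" and h: "mul t a = 0"
  shows "t = 0"
proof -
  have "sc (N a) t = 0" using mul_bar_cancel[OF aC t] h bar_C aC by simp
  then have "sc (inverse (N a)) (sc (N a) t) = 0" by simp
  then show ?thesis using Na by (simp add: sc_mult[symmetric] sc_one)
qed

lemma double_assoc_imp_comm:
  assumes S: "subalg S" and aC: "a \<in> C" and ao: "orth S a" and Na: "N a \<noteq> 0"
    and as: "\<And>u v w. u \<in> double S a \<Longrightarrow> v \<in> double S a \<Longrightarrow> w \<in> double S a \<Longrightarrow>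
       mul (mul u v) w = mul u (mul v w)"
    and x: "x \<in> S" and y: "y \<in> S"
  shows "mul x y = mul y x"
proof -
  note SC = S_C[OF S]
  have "mul (mul x y) a = mul x (mul y a)"
    using as double_base[OF S aC] double_gen[OF S aC] x y by blast
  also have "\<dots> = mul (mul y x) a" using double_mul_left[OF S aC ao x y] .
  finally have h: "mul (mul x y - mul y x) a = 0" using x y SC aC by (simp add: mul_diff_l)
  have "mul x y - mul y x = 0" by (rule mul_anisotropic_cancel[OF _ aC Na h]) (use x y SC in simp)
  then show ?thesis by simp
qed

lemma double_comm_imp_bar_id:
  assumes S: "subalg S" and aC: "a \<in> C" and ao: "orth S a" and Na: "N a \<noteq> 0"
    and cm: "\<And>u v. u \<in> double S a \<Longrightarrow> v \<in> double S a \<Longrightarrow> mul u v = mul v u"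
    and x: "x \<in> S"
  shows "bar x = x"
proof -
  note SC = S_C[OF S]
  have "mul x a = mul a x" using cm double_base[OF S aC] double_gen[OF S aC] x by blast
  also have "\<dots> = mul (bar x) a" using orth_mul_comm[OF S aC ao x] .
  finally have h: "mul (x - bar x) a = 0" using x SC aC bar_C by (simp add: mul_diff_l)
  have "x - bar x = 0" by (rule mul_anisotropic_cancel[OF _ aC Na h]) (use x SC bar_C in simp)
  then show ?thesis by simp
qed

lemma B_one_one: "B one one = 2"
  using B_self[OF one_C] N_one by simp

lemma one_ne_zero: "one \<noteq> 0"
  using N_one N_zero by force

(* Starting point for characteristic \<noteq> 2: the scalar multiples of 1, with dual bases
   [1] and [1/2]. *)
lemma scalars_dual_basis:
  assumes two: "(2::'l) \<noteq> 0"
  shows "dual_basis {sc c one | c. True} [one] [sc (inverse 2) one]"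
proof -
  define S0 where "S0 = {sc c one | c. True}"
  have mem: "sc c one \<in> S0" for c unfolding S0_def by blast
  have sub: "subalg S0" unfolding subalg_def
  proof (intro conjI ballI allI)
    show "S0 \<subseteq> C" unfolding S0_def by auto
    show "one \<in> S0" using mem[of 1] sc_one by simp
    fix x y assume "x \<in> S0" "y \<in> S0"
    then obtain c d where "x = sc c one" "y = sc d one" unfolding S0_def by blast
    then show "x + y \<in> S0" "mul x y \<in> S0"
      using mem[of "c + d"] mem[of "d * c"]
      by (simp_all add: sc_add2 mul_sc_l mul_sc_r one_l sc_mult)
  next
    fix c x assume "x \<in> S0"
    then obtain d where "x = sc d one" unfolding S0_def by blast
    then show "sc c x \<in> S0" using mem[of "c * d"] by (simp add: sc_mult)
  qed
  have "dual_basis S0 [one] [sc (inverse 2) one]" unfolding dual_basis_def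
  proof (intro conjI ballI)
    show "subalg S0" by (rule sub)
    show "set [one] \<subseteq> S0" using mem[of 1] sc_one by simp
    show "set [sc (inverse 2) one] \<subseteq> S0" using mem by simp
  next
    fix x assume "x \<in> S0"
    then obtain c where x: "x = sc c one" unfolding S0_def by blast
    show "x = expand x [one] [sc (inverse 2) one]" "x = expand x [sc (inverse 2) one] [one]"
      unfolding expand_def x using two by (simp_all add: Bsimps B_one_one sc_mult[symmetric])
  qed simp
  then show ?thesis unfolding S0_def .
qed

(* The span of 1 and any u is a subalgebra, since u\<^sup>2 = T(u) u - N(u) 1. *)
lemma subalg_span2:
  assumes uC: "u \<in> C" shows "subalg {sc c one + sc d u | c d. True}"
proof -
  define S where "S = {sc c one + sc d u | c d. True}"
  have mem: "sc c one + sc d u \<in> S" for c d unfolding S_def by blast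
  have addS: "x + y \<in> S" if xS: "x \<in> S" and yS: "y \<in> S" for x y
  proof -
    obtain c d c' d' where xy: "x = sc c one + sc d u" "y = sc c' one + sc d' u"
      using xS yS unfolding S_def by blast
    show ?thesis using mem[of "c + c'" "d + d'"] unfolding xy by (simp add: sc_add2 algebra_simps)
  qed
  have scS: "sc c x \<in> S" if xS: "x \<in> S" for c x
  proof -
    obtain d e where "x = sc d one + sc e u" using xS unfolding S_def by blast
    then show "sc c x \<in> S" using mem[of "c * d" "c * e"] by (simp add: sc_mult sc_add)
  qed
  have oneS: "one \<in> S" and uS: "u \<in> S" using mem[of 1 0] mem[of 0 1] sc_one by simp_all
  have uuS: "mul u u \<in> S"
    using square_eq[OF uC] addS[OF scS[OF uS] scS[OF oneS], of "T u" "- N u"]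
    by (simp add: sc_minus)
  have "subalg S" unfolding subalg_def
  proof (intro conjI ballI allI)
    show "S \<subseteq> C" unfolding S_def using uC by auto
    show "one \<in> S" by (rule oneS)
    fix x y assume "x \<in> S" "y \<in> S"
    then obtain c d c' d' where xy: "x = sc c one + sc d u" "y = sc c' one + sc d' u"
      unfolding S_def by blast
    show "mul x y \<in> S" unfolding xy using uC addS scS oneS uS uuS
      by (simp add: mul_add_l mul_add_r mul_sc_l mul_sc_r one_l one_r)
    show "x + y \<in> S" using addS \<open>x \<in> S\<close> \<open>y \<in> S\<close> .
  qed (use scS in auto)
  then show ?thesis unfolding S_def .
qed

(* Starting point for characteristic 2: the span of 1 and an element u with B(1,u) = 1,
   with dual bases [1, u] and [u, 1]. *)
lemma char2_dual_basis:
  assumes two: "(2::'l) = 0" and uC: "u \<in> C" and Bu: "B one u = 1"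
  shows "dual_basis {sc c one + sc d u | c d. True} [one, u] [u, one]"
  unfolding dual_basis_def
proof (intro conjI ballI)
  show "subalg {sc c one + sc d u | c d. True}" using subalg_span2[OF uC] .
  have "one = sc 1 one + sc 0 u" "u = sc 0 one + sc 1 u" using sc_one by simp_all
  then have "one \<in> {sc c one + sc d u | c d. True}" "u \<in> {sc c one + sc d u | c d. True}"
    by blast+
  then show "set [one, u] \<subseteq> {sc c one + sc d u | c d. True}"
    "set [u, one] \<subseteq> {sc c one + sc d u | c d. True}" by simp_all
next
  fix x assume "x \<in> {sc c one + sc d u | c d. True}"
  then obtain c d where x: "x = sc c one + sc d u" by blast
  have b1: "B x u = c" unfolding x using uC Bu B_self[OF uC] two by (simp add: Bsimps)
  have b2: "B x one = d" unfolding x using uC Bu B_one_one two by (simp add: Bsimps B_sym[of u])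
  show "x = expand x [one, u] [u, one]" "x = expand x [u, one] [one, u]"
    unfolding expand_def using b1 b2 x by (simp_all add: lessThan_Suc add.commute)
qed simp

lemma initial_dual_basis:
  "\<exists>S ds es. dual_basis S ds es \<and> (S = C \<or> (\<exists>x\<in>S. bar x \<noteq> x))"
proof (cases "(2::'l) = 0")
  case two: True
  obtain y where y: "y \<in> C" "B one y \<noteq> 0" using nondegB[OF one_C] one_ne_zero by blast
  define u where "u = sc (inverse (B one y)) y"
  have uC: "u \<in> C" and Bu: "B one u = 1" unfolding u_def using y by (simp_all add: B_sc2)
  have "bar u \<noteq> u"
  proof
    assume "bar u = u"
    then have "one = u + u" unfolding bar_def T_def using Bu B_sym[of u one] sc_one
      by (simp add: algebra_simps)
    also have "u + u = sc 2 u" using sc_add2[of 1 1 u] sc_one by simp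
    finally show False using two one_ne_zero by simp
  qed
  moreover have "u = sc 0 one + sc 1 u" using sc_one by simp
  then have "u \<in> {sc c one + sc d u | c d. True}" by blast
  ultimately show ?thesis using char2_dual_basis[OF two uC Bu] by blast
next
  case two: False
  define S0 where "S0 = {sc c one | c. True}"
  note DB = scalars_dual_basis[OF two, folded S0_def]
  show ?thesis
  proof (cases "S0 = C")
    case False
    then obtain a where a: "a \<in> C" "orth S0 a" "N a \<noteq> 0" using orth_anisotropic[OF DB] by blast
    have "bar a \<noteq> a"
    proof
      assume "bar a = a"
      then have "sc 2 a = 0"
        using bar_a[OF DB_subalg[OF DB] a(1,2)] sc_add2[of 1 1 a] sc_one
        by (simp add: eq_neg_iff_add_eq_0[symmetric])
      then have "sc (inverse 2) (sc 2 a) = 0" by simp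
      then show False using two a(3) by (simp add: sc_mult[symmetric] sc_one)
    qed
    then show ?thesis
      using dual_basis_double[OF DB a] double_gen[OF DB_subalg[OF DB] a(1)] by blast
  qed (use DB in blast)
qed

lemma double_step:
  assumes DB: "dual_basis S ds es" and "S \<noteq> C"
  obtains a ds' es' where "a \<in> C" "orth S a" "N a \<noteq> 0" "dual_basis (double S a) ds' es'"
  using orth_anisotropic[OF DB assms(2)] dual_basis_double[OF DB] by blast

(* Hurwitz: every composition algebra has dual bases, hence is finite-dimensional (of
   dimension 1, 2, 4 or 8).  Otherwise three doublings S1 \<subset> S2 \<subset> S3 \<subset> C would exist;
   S3 would be associative, so S2 commutative, so conjugation trivial on S1 -- but S1 was
   chosen with a nontrivial conjugation. *)
theorem hurwitz_dual_basis: "\<exists>ds es. dual_basis C ds es"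
proof (rule ccontr)
  assume none: "\<nexists>ds es. dual_basis C ds es"
  obtain S1 ds1 es1 x1 where DB1: "dual_basis S1 ds1 es1" and x1: "x1 \<in> S1" "bar x1 \<noteq> x1"
    using initial_dual_basis none by blast
  have "S1 \<noteq> C" using none DB1 by blast
  then obtain a2 ds2 es2 where a2: "a2 \<in> C" "orth S1 a2" "N a2 \<noteq> 0"
    and DB2: "dual_basis (double S1 a2) ds2 es2" by (rule double_step[OF DB1])
  define S2 where "S2 = double S1 a2"
  have "S2 \<noteq> C" using none DB2 unfolding S2_def by blast
  then obtain a3 ds3 es3 where a3: "a3 \<in> C" "orth S2 a3" "N a3 \<noteq> 0"
    and DB3: "dual_basis (double S2 a3) ds3 es3" by (rule double_step[OF DB2[folded S2_def]])
  have "double S2 a3 \<noteq> C" using none DB3 by blast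
  then obtain a4 where a4: "a4 \<in> C" "orth (double S2 a3) a4" "N a4 \<noteq> 0"
    using orth_anisotropic[OF DB3] by blast
  have assoc3: "mul (mul u v) w = mul u (mul v w)"
    if "u \<in> double S2 a3" "v \<in> double S2 a3" "w \<in> double S2 a3" for u v w
    using dual_basis_assoc[OF DB3 a4] that by blast
  have comm2: "mul u v = mul v u" if "u \<in> S2" "v \<in> S2" for u v
    using double_assoc_imp_comm[OF DB_subalg[OF DB2[folded S2_def]] a3 assoc3] that by blast
  have "bar x1 = x1"
    using double_comm_imp_bar_id[OF DB_subalg[OF DB1] a2 comm2[unfolded S2_def]] x1(1) by blast
  with x1 show False by blast
qed

end


context comp_alg
begin

definition coded_module :: "('m \<Rightarrow> 'c) \<Rightarrow> ('l, 'c) module" where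
  "coded_module enc =
     \<lparr>carrier = enc ` C,
      mult = (\<lambda>u v. enc (mul (the_inv_into C enc u) (the_inv_into C enc v))),
      one = enc one, zero = enc 0,
      add = (\<lambda>u v. enc (the_inv_into C enc u + the_inv_into C enc v)),
      smult = (\<lambda>c u. enc (sc c (the_inv_into C enc u)))\<rparr>"

definition coded_norm :: "('m \<Rightarrow> 'c) \<Rightarrow> 'c \<Rightarrow> 'l" where
  "coded_norm enc u = N (the_inv_into C enc u)"

context
  fixes enc :: "'m \<Rightarrow> 'c" assumes inj: "inj_on enc C"
begin

abbreviation "M \<equiv> coded_module enc"

lemma decode[simp]: "x \<in> C \<Longrightarrow> the_inv_into C enc (enc x) = x"
  using the_inv_into_f_f[OF inj] .

lemma coded_simps[simp]:
  "carrier M = enc ` C" "\<one>\<^bsub>M\<^esub> = enc one" "\<zero>\<^bsub>M\<^esub> = enc 0"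
  "x \<in> C \<Longrightarrow> y \<in> C \<Longrightarrow> enc x \<otimes>\<^bsub>M\<^esub> enc y = enc (mul x y)"
  "x \<in> C \<Longrightarrow> y \<in> C \<Longrightarrow> enc x \<oplus>\<^bsub>M\<^esub> enc y = enc (x + y)"
  "x \<in> C \<Longrightarrow> c \<odot>\<^bsub>M\<^esub> enc x = enc (sc c x)"
  "x \<in> C \<Longrightarrow> coded_norm enc (enc x) = N x"
  unfolding coded_module_def coded_norm_def by simp_all

lemma coded_abelian_group: "abelian_group M"
proof (rule abelian_groupI)
  fix x y z assume "x \<in> carrier M" "y \<in> carrier M" "z \<in> carrier M"
  then obtain a b c where "a \<in> C" "b \<in> C" "c \<in> C" "x = enc a" "y = enc b" "z = enc c" by auto
  then show "x \<oplus>\<^bsub>M\<^esub> y \<in> carrier M" "(x \<oplus>\<^bsub>M\<^esub> y) \<oplus>\<^bsub>M\<^esub> z = x \<oplus>\<^bsub>M\<^esub> (y \<oplus>\<^bsub>M\<^esub> z)"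
    "x \<oplus>\<^bsub>M\<^esub> y = y \<oplus>\<^bsub>M\<^esub> x" "\<zero>\<^bsub>M\<^esub> \<oplus>\<^bsub>M\<^esub> x = x"
    by (simp_all add: add_ac)
  show "\<exists>y\<in>carrier M. y \<oplus>\<^bsub>M\<^esub> x = \<zero>\<^bsub>M\<^esub>"
    using \<open>a \<in> C\<close> \<open>x = enc a\<close> by (auto intro!: bexI[of _ "- a"])
qed simp

lemma coded_algebra: "nonassoc_algebra M"
  unfolding nonassoc_algebra_def nonassoc_ring_1_def
  using coded_abelian_group
  by (auto simp: one_l one_r mul_add_l mul_add_r sc_add sc_add2 sc_mult sc_one mul_sc_l mul_sc_r)

lemma coded_quadratic_form: "quadratic_form M (coded_norm enc)"
  unfolding quadratic_form_def Let_def
proof (intro conjI allI ballI)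
  fix c x assume "x \<in> carrier M"
  then obtain a where "a \<in> C" "x = enc a" by auto
  then show "coded_norm enc (c \<odot>\<^bsub>M\<^esub> x) = c\<^sup>2 * coded_norm enc x" by (simp add: N_sc)
next
  fix c x x' y assume "x \<in> carrier M" "x' \<in> carrier M" "y \<in> carrier M"
  then obtain a a' b where a: "a \<in> C" "a' \<in> C" "b \<in> C" "x = enc a" "x' = enc a'" "y = enc b"
    by auto
  then show
    "coded_norm enc (x \<oplus>\<^bsub>M\<^esub> x' \<oplus>\<^bsub>M\<^esub> y) - coded_norm enc (x \<oplus>\<^bsub>M\<^esub> x') - coded_norm enc y =
       coded_norm enc (x \<oplus>\<^bsub>M\<^esub> y) - coded_norm enc x - coded_norm enc y
       + (coded_norm enc (x' \<oplus>\<^bsub>M\<^esub> y) - coded_norm enc x' - coded_norm enc y)"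
    "coded_norm enc (c \<odot>\<^bsub>M\<^esub> x \<oplus>\<^bsub>M\<^esub> y) - coded_norm enc (c \<odot>\<^bsub>M\<^esub> x) - coded_norm enc y =
       c * (coded_norm enc (x \<oplus>\<^bsub>M\<^esub> y) - coded_norm enc x - coded_norm enc y)"
    "coded_norm enc (y \<oplus>\<^bsub>M\<^esub> (x \<oplus>\<^bsub>M\<^esub> x')) - coded_norm enc y - coded_norm enc (x \<oplus>\<^bsub>M\<^esub> x') =
       coded_norm enc (y \<oplus>\<^bsub>M\<^esub> x) - coded_norm enc y - coded_norm enc x
       + (coded_norm enc (y \<oplus>\<^bsub>M\<^esub> x') - coded_norm enc y - coded_norm enc x')"
    "coded_norm enc (y \<oplus>\<^bsub>M\<^esub> c \<odot>\<^bsub>M\<^esub> x) - coded_norm enc y - coded_norm enc (c \<odot>\<^bsub>M\<^esub> x) =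
       c * (coded_norm enc (y \<oplus>\<^bsub>M\<^esub> x) - coded_norm enc y - coded_norm enc x)"
    using B_add1[of a a' b] B_sc1[of a b c] B_add2[of a a' b] B_sc2[of a b c]
    unfolding B_def by simp_all
qed

lemma coded_composition_algebra: "composition_algebra M (coded_norm enc)"
  unfolding composition_algebra_def
proof (intro conjI ballI impI)
  fix x assume "x \<in> carrier M"
    and h: "\<forall>y\<in>carrier M. coded_norm enc (x \<oplus>\<^bsub>M\<^esub> y) - coded_norm enc x - coded_norm enc y = 0"
  then obtain a where a: "a \<in> C" "x = enc a" by auto
  have "a = 0" using nondegB[OF a(1)] h a unfolding B_def by auto
  then show "x = \<zero>\<^bsub>M\<^esub>" using a by simp
next
  fix x y assume "x \<in> carrier M" "y \<in> carrier M"
  then show "coded_norm enc (x \<otimes>\<^bsub>M\<^esub> y) = coded_norm enc x * coded_norm enc y"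
    by (auto simp: N_mul)
qed (use coded_algebra coded_quadratic_form in auto)

end

lemma dual_basis_coords_inj:
  assumes DB: "dual_basis C ds es"
  shows "inj_on (\<lambda>x i. if i < length ds then B x (es ! i) else 0) C"
proof (rule inj_onI)
  fix x y assume x: "x \<in> C" and y: "y \<in> C"
    and e: "(\<lambda>i. if i < length ds then B x (es ! i) else 0)
          = (\<lambda>i. if i < length ds then B y (es ! i) else 0)"
  have "B x (es ! i) = B y (es ! i)" if "i < length ds" for i
    using fun_cong[OF e, of i] that by simp
  then have "expand x ds es = expand y ds es" unfolding expand_def by simp
  then show "x = y" using DB_expand1[OF DB] x y by metis
qed

lemma nat_coded_composition_algebra:
  "\<exists>(M :: ('l, nat \<Rightarrow> 'l) module) N' enc. composition_algebra M N' \<and>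
     (\<forall>x\<in>C. enc x \<in> carrier M \<and> N' (enc x) = N x) \<and>
     (\<forall>x\<in>C. \<forall>y\<in>C. enc x \<otimes>\<^bsub>M\<^esub> enc y = enc (mul x y) \<and> enc x \<oplus>\<^bsub>M\<^esub> enc y = enc (x + y)) \<and>
     \<one>\<^bsub>M\<^esub> = enc one"
proof -
  obtain ds es where DB: "dual_basis C ds es" using hurwitz_dual_basis by blast
  define enc :: "'m \<Rightarrow> nat \<Rightarrow> 'l" where "enc x = (\<lambda>i. if i < length ds then B x (es ! i) else 0)" for x
  have inj: "inj_on enc C" unfolding enc_def by (rule dual_basis_coords_inj[OF DB])
  show ?thesis
    by (intro exI[of _ "coded_module enc"] exI[of _ "coded_norm enc"] exI[of _ enc])
      (simp add: coded_composition_algebra[OF inj] coded_simps[OF inj])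
qed

end


locale mq_map =
  fixes K :: "('k, 'b) ring_scheme" and q :: "'k \<Rightarrow> 'l::field"
  assumes R: "nonassoc_ring_1 K" and Q: "mult_quadratic_map K q"
begin

abbreviation CK where "CK \<equiv> carrier K"

lemma AG: "abelian_group K" using R unfolding nonassoc_ring_1_def by blast
lemma mC: "a \<in> CK \<Longrightarrow> b \<in> CK \<Longrightarrow> a \<otimes>\<^bsub>K\<^esub> b \<in> CK" using R unfolding nonassoc_ring_1_def by blast
lemma oneC: "\<one>\<^bsub>K\<^esub> \<in> CK" using R unfolding nonassoc_ring_1_def by blast
lemma one_l: "a \<in> CK \<Longrightarrow> \<one>\<^bsub>K\<^esub> \<otimes>\<^bsub>K\<^esub> a = a" using R unfolding nonassoc_ring_1_def by blast
lemma one_r: "a \<in> CK \<Longrightarrow> a \<otimes>\<^bsub>K\<^esub> \<one>\<^bsub>K\<^esub> = a" using R unfolding nonassoc_ring_1_def by blast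
lemma dl: "x \<in> CK \<Longrightarrow> y \<in> CK \<Longrightarrow> z \<in> CK \<Longrightarrow>
   (x \<oplus>\<^bsub>K\<^esub> y) \<otimes>\<^bsub>K\<^esub> z = x \<otimes>\<^bsub>K\<^esub> z \<oplus>\<^bsub>K\<^esub> y \<otimes>\<^bsub>K\<^esub> z"
  using R unfolding nonassoc_ring_1_def by blast
lemma dr: "x \<in> CK \<Longrightarrow> y \<in> CK \<Longrightarrow> z \<in> CK \<Longrightarrow>
   z \<otimes>\<^bsub>K\<^esub> (x \<oplus>\<^bsub>K\<^esub> y) = z \<otimes>\<^bsub>K\<^esub> x \<oplus>\<^bsub>K\<^esub> z \<otimes>\<^bsub>K\<^esub> y"
  using R unfolding nonassoc_ring_1_def by blast

lemma AM: "abelian_monoid K" using AG unfolding abelian_group_def by blast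
lemma aC: "a \<in> CK \<Longrightarrow> b \<in> CK \<Longrightarrow> a \<oplus>\<^bsub>K\<^esub> b \<in> CK"
  using abelian_monoid.a_closed[OF AM] .
lemma a_comm: "a \<in> CK \<Longrightarrow> b \<in> CK \<Longrightarrow> a \<oplus>\<^bsub>K\<^esub> b = b \<oplus>\<^bsub>K\<^esub> a"
  using abelian_monoid.a_comm[OF AM] .
lemma z_l: "a \<in> CK \<Longrightarrow> \<zero>\<^bsub>K\<^esub> \<oplus>\<^bsub>K\<^esub> a = a"
  using abelian_monoid.l_zero[OF AM] .

lemmas KC = mC oneC aC

definition f where "f a b = q (a \<oplus>\<^bsub>K\<^esub> b) - q a - q b"

lemma q_mul: "a \<in> CK \<Longrightarrow> b \<in> CK \<Longrightarrow> q (a \<otimes>\<^bsub>K\<^esub> b) = q a * q b"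
  using Q unfolding mult_quadratic_map_def by blast
lemma q_int: "q ([n] \<cdot>\<^bsub>K\<^esub> \<one>\<^bsub>K\<^esub>) = of_int (n^2)"
  using Q unfolding mult_quadratic_map_def by blast
lemma f_add1: "a \<in> CK \<Longrightarrow> a' \<in> CK \<Longrightarrow> b \<in> CK \<Longrightarrow> f (a \<oplus>\<^bsub>K\<^esub> a') b = f a b + f a' b"
  using Q unfolding mult_quadratic_map_def f_def Let_def by blast
lemma f_add2: "a \<in> CK \<Longrightarrow> a' \<in> CK \<Longrightarrow> b \<in> CK \<Longrightarrow> f b (a \<oplus>\<^bsub>K\<^esub> a') = f b a + f b a'"
  using Q unfolding mult_quadratic_map_def f_def Let_def by blast
lemma f_sym: "a \<in> CK \<Longrightarrow> b \<in> CK \<Longrightarrow> f a b = f b a"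
  unfolding f_def by (simp add: a_comm)

lemma q_one: "q \<one>\<^bsub>K\<^esub> = 1"
  using q_int[of 1] oneC by (simp add: add_pow_def int_pow_def2 z_l)
lemma q_two: "q (\<one>\<^bsub>K\<^esub> \<oplus>\<^bsub>K\<^esub> \<one>\<^bsub>K\<^esub>) = 4"
  using q_int[of 2] oneC by (simp add: add_pow_def int_pow_def2 z_l numeral_2_eq_2)

(* q is homogeneous of degree 2 for the integer 2, hence f(a,a) = 2 q(a). *)
lemma f_self:
  assumes a: "a \<in> CK" shows "f a a = 2 * q a"
proof -
  have "a \<oplus>\<^bsub>K\<^esub> a = (\<one>\<^bsub>K\<^esub> \<oplus>\<^bsub>K\<^esub> \<one>\<^bsub>K\<^esub>) \<otimes>\<^bsub>K\<^esub> a"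
    using dl[OF oneC oneC a] one_l[OF a] by simp
  then have "q (a \<oplus>\<^bsub>K\<^esub> a) = 4 * q a" using q_mul q_two a KC by simp
  then show ?thesis unfolding f_def by simp
qed

(* The identities for f obtained by linearising q(ab) = q(a) q(b), as for B above. *)
lemma f_mul_right:
  assumes C: "a \<in> CK" "b \<in> CK" "c \<in> CK"
  shows "f (a \<otimes>\<^bsub>K\<^esub> c) (b \<otimes>\<^bsub>K\<^esub> c) = q c * f a b"
  using q_mul[of "a \<oplus>\<^bsub>K\<^esub> b" c] dl[OF C] C aC q_mul unfolding f_def
  by (simp add: algebra_simps)
lemma f_mul_left:
  assumes C: "a \<in> CK" "b \<in> CK" "c \<in> CK"
  shows "f (c \<otimes>\<^bsub>K\<^esub> a) (c \<otimes>\<^bsub>K\<^esub> b) = q c * f a b"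
  using q_mul[of c "a \<oplus>\<^bsub>K\<^esub> b"] dr[OF C] C aC q_mul unfolding f_def
  by (simp add: algebra_simps)

lemma f_mul_lin:
  assumes C: "x \<in> CK" "y \<in> CK" "c \<in> CK" "d \<in> CK"
  shows "f (x \<otimes>\<^bsub>K\<^esub> c) (y \<otimes>\<^bsub>K\<^esub> d) + f (x \<otimes>\<^bsub>K\<^esub> d) (y \<otimes>\<^bsub>K\<^esub> c) = f x y * f c d"
proof -
  have "f (x \<otimes>\<^bsub>K\<^esub> (c \<oplus>\<^bsub>K\<^esub> d)) (y \<otimes>\<^bsub>K\<^esub> (c \<oplus>\<^bsub>K\<^esub> d)) = q (c \<oplus>\<^bsub>K\<^esub> d) * f x y"
    using f_mul_right C KC by simp
  moreover have "f (x \<otimes>\<^bsub>K\<^esub> (c \<oplus>\<^bsub>K\<^esub> d)) (y \<otimes>\<^bsub>K\<^esub> (c \<oplus>\<^bsub>K\<^esub> d)) =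
      f (x \<otimes>\<^bsub>K\<^esub> c) (y \<otimes>\<^bsub>K\<^esub> c) + f (x \<otimes>\<^bsub>K\<^esub> c) (y \<otimes>\<^bsub>K\<^esub> d)
      + (f (x \<otimes>\<^bsub>K\<^esub> d) (y \<otimes>\<^bsub>K\<^esub> c) + f (x \<otimes>\<^bsub>K\<^esub> d) (y \<otimes>\<^bsub>K\<^esub> d))"
    using C KC by (simp add: dr f_add1 f_add2)
  moreover have "q (c \<oplus>\<^bsub>K\<^esub> d) = q c + q d + f c d" unfolding f_def by simp
  ultimately show ?thesis using C by (simp add: f_mul_right algebra_simps)
qed

lemma f_adj_right:
  assumes C: "a \<in> CK" "b \<in> CK" "c \<in> CK"
  shows "f c (a \<otimes>\<^bsub>K\<^esub> b) = f b \<one>\<^bsub>K\<^esub> * f c a - f (c \<otimes>\<^bsub>K\<^esub> b) a"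
  using f_mul_lin[of a c b "\<one>\<^bsub>K\<^esub>"] C KC f_sym[of c "a \<otimes>\<^bsub>K\<^esub> b"] f_sym[of "c \<otimes>\<^bsub>K\<^esub> b" a]
    f_sym[of c a] by (simp add: one_r algebra_simps)
lemma f_adj_left:
  assumes C: "a \<in> CK" "b \<in> CK" "c \<in> CK"
  shows "f c (b \<otimes>\<^bsub>K\<^esub> a) = f b \<one>\<^bsub>K\<^esub> * f c a - f (b \<otimes>\<^bsub>K\<^esub> c) a"
  using f_mul_lin[of b "\<one>\<^bsub>K\<^esub>" a c] C KC f_sym[of c "b \<otimes>\<^bsub>K\<^esub> a"] f_sym[of "b \<otimes>\<^bsub>K\<^esub> c" a]
    f_sym[of c a] by (simp add: one_l algebra_simps)


(* Formal 'l-linear combinations of elements of K, as lists of (coefficient, element). *)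
definition Formal :: "('l \<times> 'k) list set" where "Formal = {v. \<forall>p\<in>set v. snd p \<in> CK}"
definition pair where "pair c v = sum_list (map (\<lambda>r. fst r * f c (snd r)) v)"
definition fpolar where "fpolar v w = sum_list (map (\<lambda>p. fst p * pair (snd p) w) v)"
primrec fq where
  "fq [] = 0"
| "fq (p # v) = fst p ^ 2 * q (snd p) + fst p * pair (snd p) v + fq v"
definition fscale :: "'l \<Rightarrow> ('l \<times> 'k) list \<Rightarrow> ('l \<times> 'k) list" where "fscale c v = map (\<lambda>p. (c * fst p, snd p)) v"
definition fmul1 :: "'l \<times> 'k \<Rightarrow> ('l \<times> 'k) list \<Rightarrow> ('l \<times> 'k) list" where "fmul1 p w = map (\<lambda>r. (fst p * fst r, snd p \<otimes>\<^bsub>K\<^esub> snd r)) w"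
primrec fmul :: "('l \<times> 'k) list \<Rightarrow> ('l \<times> 'k) list \<Rightarrow> ('l \<times> 'k) list" where
  "fmul [] w = []"
| "fmul (p # v) w = fmul1 p w @ fmul v w"

lemma Formal_simps[simp]: "[] \<in> Formal" "(p # v \<in> Formal) = (snd p \<in> CK \<and> v \<in> Formal)"
  "(v @ w \<in> Formal) = (v \<in> Formal \<and> w \<in> Formal)"
  unfolding Formal_def by auto
lemma Formal_fscale[simp]: "(fscale c v \<in> Formal) = (v \<in> Formal)" unfolding Formal_def fscale_def by auto
lemma Formal_fmul1[simp]: "snd p \<in> CK \<Longrightarrow> w \<in> Formal \<Longrightarrow> fmul1 p w \<in> Formal"
  unfolding Formal_def fmul1_def using mC by auto
lemma Formal_fmul[simp]: "v \<in> Formal \<Longrightarrow> w \<in> Formal \<Longrightarrow> fmul v w \<in> Formal"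
  by (induction v) auto

lemma pair_simps[simp]: "pair c [] = 0" "pair c (r # w) = fst r * f c (snd r) + pair c w"
  "pair c (v @ w) = pair c v + pair c w"
  unfolding pair_def by auto
lemma pair_fscale[simp]: "pair c (fscale a v) = a * pair c v"
  unfolding pair_def fscale_def by (induction v) (auto simp: algebra_simps)

lemma fpolar_simps[simp]: "fpolar [] w = 0" "fpolar (p # v) w = fst p * pair (snd p) w + fpolar v w"
  "fpolar (v @ v') w = fpolar v w + fpolar v' w" "fpolar v [] = 0"
  unfolding fpolar_def by auto
lemma fpolar_Cons2: "v \<in> Formal \<Longrightarrow> snd r \<in> CK \<Longrightarrow> fpolar v (r # w) = fst r * pair (snd r) v + fpolar v w"
  by (induction v) (auto simp: f_sym[of "snd r"] algebra_simps)
lemma fpolar_append2[simp]: "fpolar v (w @ w') = fpolar v w + fpolar v w'"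
  by (induction v) (auto simp: algebra_simps)
lemma fpolar_sym: "v \<in> Formal \<Longrightarrow> w \<in> Formal \<Longrightarrow> fpolar v w = fpolar w v"
  by (induction v) (auto simp: fpolar_Cons2)
lemma fpolar_fscale1[simp]: "fpolar (fscale a v) w = a * fpolar v w"
  unfolding fscale_def by (induction v) (auto simp: algebra_simps)
lemma fpolar_fscale2[simp]: "fpolar v (fscale a w) = a * fpolar v w"
  by (induction v) (auto simp: algebra_simps)

lemma fq_append: "v \<in> Formal \<Longrightarrow> w \<in> Formal \<Longrightarrow> fq (v @ w) = fq v + fq w + fpolar v w"
  by (induction v) (auto simp: algebra_simps)
lemma fscale_simps[simp]: "fscale a [] = []" "fscale a (p # v) = (a * fst p, snd p) # fscale a v"
  "fscale a (v @ w) = fscale a v @ fscale a w"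
  unfolding fscale_def by auto
lemma fq_fscale[simp]: "fq (fscale a v) = a^2 * fq v"
  by (induction v) (auto simp: algebra_simps power2_eq_square)
lemma fpolar_self: "v \<in> Formal \<Longrightarrow> fpolar v v = 2 * fq v"
proof (induction v)
  case (Cons p v)
  then show ?case by (simp add: fpolar_Cons2 f_self algebra_simps power2_eq_square)
qed simp


lemma fmul1_simps[simp]: "fmul1 p [] = []"
  "fmul1 p (r # w) = (fst p * fst r, snd p \<otimes>\<^bsub>K\<^esub> snd r) # fmul1 p w"
  "fmul1 p (w @ w') = fmul1 p w @ fmul1 p w'"
  unfolding fmul1_def by auto

lemma fmul_append1[simp]: "fmul (v @ v') w = fmul v w @ fmul v' w"
  by (induction v) auto
lemma fmul_fscale1: "fmul (fscale a v) w = fscale a (fmul v w)"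
  by (induction v) (simp_all add: fmul1_def fscale_def algebra_simps)
lemma fmul1_fscale: "fmul1 p (fscale a w) = fscale a (fmul1 p w)"
  by (induction w) (simp_all add: algebra_simps)
lemma fmul_fscale2: "fmul v (fscale a w) = fscale a (fmul v w)"
  by (induction v) (auto simp: fmul1_fscale)

lemma pair_fmul_Cons2: "pair c (fmul v (r # w)) =
    sum_list (map (\<lambda>p. fst p * fst r * f c (snd p \<otimes>\<^bsub>K\<^esub> snd r)) v) + pair c (fmul v w)"
  by (induction v) (auto simp: algebra_simps)

lemma pair_fmul_append2: "pair c (fmul w (v @ v')) = pair c (fmul w v) + pair c (fmul w v')"
  by (induction w) (auto simp: algebra_simps)

(* The pairing of a product against c, computed via the adjoint identities for f: it
   depends on the factors only through their pairings, so the product is compatible with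
   the radical of the pairing. *)
lemma pair_column: "c \<in> CK \<Longrightarrow> snd r \<in> CK \<Longrightarrow> v \<in> Formal \<Longrightarrow>
   sum_list (map (\<lambda>p. fst p * fst r * f c (snd p \<otimes>\<^bsub>K\<^esub> snd r)) v)
   = fst r * (f (snd r) \<one>\<^bsub>K\<^esub> * pair c v - pair (c \<otimes>\<^bsub>K\<^esub> snd r) v)"
  by (induction v) (auto simp: f_adj_right algebra_simps)

lemma pair_fmul_left: "c \<in> CK \<Longrightarrow> v \<in> Formal \<Longrightarrow> w \<in> Formal \<Longrightarrow>
  pair c (fmul v w) = sum_list (map (\<lambda>r. fst r * (f (snd r) \<one>\<^bsub>K\<^esub> * pair c v - pair (c \<otimes>\<^bsub>K\<^esub> snd r) v)) w)"
proof (induction w)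
  case Nil then show ?case by (induction v) auto
next
  case (Cons r w)
  then show ?case by (simp add: pair_fmul_Cons2 pair_column)
qed

lemma pair_fmul1: "c \<in> CK \<Longrightarrow> snd p \<in> CK \<Longrightarrow> v \<in> Formal \<Longrightarrow>
  pair c (fmul1 p v) = fst p * (f (snd p) \<one>\<^bsub>K\<^esub> * pair c v - pair (snd p \<otimes>\<^bsub>K\<^esub> c) v)"
  by (induction v) (auto simp: f_adj_left algebra_simps)

lemma pair_fmul_right: "c \<in> CK \<Longrightarrow> v \<in> Formal \<Longrightarrow> w \<in> Formal \<Longrightarrow>
  pair c (fmul w v) = sum_list (map (\<lambda>p. fst p * (f (snd p) \<one>\<^bsub>K\<^esub> * pair c v - pair (snd p \<otimes>\<^bsub>K\<^esub> c) v)) w)"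
  by (induction w) (auto simp: pair_fmul1)

(* Formal versions of the linearised multiplicativity of q; they combine into
   multiplicativity of the formal quadratic form. *)
lemma pair_fmul1_cross: "x \<in> CK \<Longrightarrow> y \<in> CK \<Longrightarrow> z \<in> CK \<Longrightarrow> w \<in> Formal \<Longrightarrow>
  l * pair (x \<otimes>\<^bsub>K\<^esub> y) (fmul1 (k, z) w) + k * pair (z \<otimes>\<^bsub>K\<^esub> y) (fmul1 (l, x) w) = l * k * f x z * pair y w"
proof (induction w)
  case (Cons r w)
  have "f (x \<otimes>\<^bsub>K\<^esub> y) (z \<otimes>\<^bsub>K\<^esub> snd r) = f x z * f y (snd r) - f (x \<otimes>\<^bsub>K\<^esub> snd r) (z \<otimes>\<^bsub>K\<^esub> y)"
    using f_mul_lin[of x z y "snd r"] Cons by (simp add: eq_diff_eq)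
  moreover have "f (z \<otimes>\<^bsub>K\<^esub> y) (x \<otimes>\<^bsub>K\<^esub> snd r) = f (x \<otimes>\<^bsub>K\<^esub> snd r) (z \<otimes>\<^bsub>K\<^esub> y)"
    using f_sym mC Cons by simp
  ultimately have e: "f (x \<otimes>\<^bsub>K\<^esub> y) (z \<otimes>\<^bsub>K\<^esub> snd r) + f (z \<otimes>\<^bsub>K\<^esub> y) (x \<otimes>\<^bsub>K\<^esub> snd r)
     = f x z * f y (snd r)" by simp
  have "l * pair (x \<otimes>\<^bsub>K\<^esub> y) (fmul1 (k, z) (r # w)) + k * pair (z \<otimes>\<^bsub>K\<^esub> y) (fmul1 (l, x) (r # w))
     = (l * pair (x \<otimes>\<^bsub>K\<^esub> y) (fmul1 (k, z) w) + k * pair (z \<otimes>\<^bsub>K\<^esub> y) (fmul1 (l, x) w))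
       + l * k * fst r * (f (x \<otimes>\<^bsub>K\<^esub> y) (z \<otimes>\<^bsub>K\<^esub> snd r) + f (z \<otimes>\<^bsub>K\<^esub> y) (x \<otimes>\<^bsub>K\<^esub> snd r))"
    by (simp add: algebra_simps)
  also have "\<dots> = l * k * f x z * pair y (r # w)" using Cons e by (simp add: algebra_simps)
  finally show ?case .
qed simp

lemma pair_fmul1_same: "x \<in> CK \<Longrightarrow> y \<in> CK \<Longrightarrow> w \<in> Formal \<Longrightarrow>
  pair (x \<otimes>\<^bsub>K\<^esub> y) (fmul1 (l, x) w) = l * q x * pair y w"
  by (induction w) (auto simp: f_mul_left algebra_simps)

lemma fpolar_fmul1_fmul1: "x \<in> CK \<Longrightarrow> z \<in> CK \<Longrightarrow> w \<in> Formal \<Longrightarrow>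
  fpolar (fmul1 (l, x) w) (fmul1 (k, z) w) = l * k * f x z * fq w"
proof (induction w)
  case (Cons r w)
  obtain m y where r: "r = (m, y)" by force
  have y: "y \<in> CK" using Cons r by simp
  have "fpolar (fmul1 (l, x) (r # w)) (fmul1 (k, z) (r # w)) =
     l * m * (k * m * f (x \<otimes>\<^bsub>K\<^esub> y) (z \<otimes>\<^bsub>K\<^esub> y) + pair (x \<otimes>\<^bsub>K\<^esub> y) (fmul1 (k, z) w))
     + (k * m * pair (z \<otimes>\<^bsub>K\<^esub> y) (fmul1 (l, x) w) + fpolar (fmul1 (l, x) w) (fmul1 (k, z) w))"
    using Cons r y by (simp add: fpolar_Cons2 mC)
  also have "\<dots> = l * k * f x z * fq (r # w)"
  proof -
    have "l * m * pair (x \<otimes>\<^bsub>K\<^esub> y) (fmul1 (k, z) w) + k * m * pair (z \<otimes>\<^bsub>K\<^esub> y) (fmul1 (l, x) w)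
       = m * (l * k * f x z * pair y w)" using arg_cong[OF pair_fmul1_cross[of x y z w l k], of "\<lambda>t. m * t"] Cons y
      by (simp add: algebra_simps)
    then show ?thesis using Cons r y by (simp add: f_mul_right algebra_simps power2_eq_square)
  qed
  finally show ?case .
qed simp

lemma fq_fmul1: "x \<in> CK \<Longrightarrow> w \<in> Formal \<Longrightarrow> fq (fmul1 (l, x) w) = l^2 * q x * fq w"
  by (induction w) (auto simp: pair_fmul1_same q_mul algebra_simps power2_eq_square)

lemma fpolar_fmul1_fmul: "snd p \<in> CK \<Longrightarrow> v \<in> Formal \<Longrightarrow> w \<in> Formal \<Longrightarrow>
  fpolar (fmul1 p w) (fmul v w) = fst p * pair (snd p) v * fq w"
proof (induction v)
  case (Cons p' v)
  then show ?case using fpolar_fmul1_fmul1[of "snd p" "snd p'" w "fst p" "fst p'"]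
    by (simp add: algebra_simps)
qed simp

lemma fq_fmul: "v \<in> Formal \<Longrightarrow> w \<in> Formal \<Longrightarrow> fq (fmul v w) = fq v * fq w"
proof (induction v)
  case (Cons p v)
  obtain l x where p: "p = (l, x)" by force
  show ?case using Cons p fq_fmul1[of x w l] fpolar_fmul1_fmul[of p v w]
    by (simp add: fq_append algebra_simps)
qed simp


(* The algebra Alg: a formal combination v is identified with the functional
   c \<mapsto> f(c, v) on K (zero outside K); Alg is the set of these functionals, i.e. the formal
   combinations modulo the radical of the pairing. *)
definition ev :: "('l \<times> 'k) list \<Rightarrow> 'k \<Rightarrow> 'l" where
  "ev v = (\<lambda>c. if c \<in> CK then pair c v else 0)"
definition Alg where "Alg = ev ` Formal"
definition rep where "rep x = (SOME v. v \<in> Formal \<and> ev v = x)"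
definition Alg_mul where "Alg_mul x y = ev (fmul (rep x) (rep y))"
definition Alg_one where "Alg_one = ev [(1, \<one>\<^bsub>K\<^esub>)]"
definition Alg_N where "Alg_N x = fq (rep x)"
definition Alg_scale :: "'l \<Rightarrow> ('k \<Rightarrow> 'l) \<Rightarrow> ('k \<Rightarrow> 'l)" where "Alg_scale c x = (\<lambda>k. c * x k)"

lemma ev_app: "ev (v @ w) = ev v + ev w"
  unfolding ev_def by (auto simp: fun_eq_iff)
lemma ev_nil: "ev [] = 0"
  unfolding ev_def by (auto simp: fun_eq_iff)
lemma ev_fscale: "ev (fscale a v) = Alg_scale a (ev v)"
  unfolding ev_def Alg_scale_def by (auto simp: fun_eq_iff)
lemma ev_eq: "ev v = ev w \<longleftrightarrow> (\<forall>c\<in>CK. pair c v = pair c w)"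
  unfolding ev_def fun_eq_iff by (metis)
lemma ev_zero: "ev v = 0 \<longleftrightarrow> (\<forall>c\<in>CK. pair c v = 0)"
  using ev_eq[of v "[]"] ev_nil by simp

lemma AlgI: "v \<in> Formal \<Longrightarrow> ev v \<in> Alg" unfolding Alg_def by blast
lemma AlgE: "x \<in> Alg \<Longrightarrow> (\<And>v. v \<in> Formal \<Longrightarrow> x = ev v \<Longrightarrow> P) \<Longrightarrow> P"
  unfolding Alg_def by blast
lemma rep: "x \<in> Alg \<Longrightarrow> rep x \<in> Formal \<and> ev (rep x) = x"
  unfolding rep_def Alg_def by (rule someI_ex) blast

(* The product of formal combinations respects the radical of the pairing (by the formulas
   for pair c (fmul v w) above), so Alg_mul does not depend on the representatives. *)
lemma ev_fmul_cong1: "v \<in> Formal \<Longrightarrow> v' \<in> Formal \<Longrightarrow> w \<in> Formal \<Longrightarrow> ev v = ev v' \<Longrightarrow>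
   ev (fmul v w) = ev (fmul v' w)"
  unfolding ev_eq by (auto simp: pair_fmul_left mC Formal_def intro!: arg_cong[where f = sum_list] map_cong)
lemma ev_fmul_cong2: "v \<in> Formal \<Longrightarrow> v' \<in> Formal \<Longrightarrow> w \<in> Formal \<Longrightarrow> ev v = ev v' \<Longrightarrow>
   ev (fmul w v) = ev (fmul w v')"
  unfolding ev_eq by (auto simp: pair_fmul_right mC Formal_def intro!: arg_cong[where f = sum_list] map_cong)

lemma Alg_mul_ev: "v \<in> Formal \<Longrightarrow> w \<in> Formal \<Longrightarrow> Alg_mul (ev v) (ev w) = ev (fmul v w)"
proof -
  assume v: "v \<in> Formal" and w: "w \<in> Formal"
  have r1: "rep (ev v) \<in> Formal" "ev (rep (ev v)) = ev v" using rep[OF AlgI[OF v]] by auto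
  have r2: "rep (ev w) \<in> Formal" "ev (rep (ev w)) = ev w" using rep[OF AlgI[OF w]] by auto
  have "ev (fmul (rep (ev v)) (rep (ev w))) = ev (fmul v (rep (ev w)))"
    using ev_fmul_cong1 r1 r2 v by blast
  also have "\<dots> = ev (fmul v w)" using ev_fmul_cong2 r2 v w by blast
  finally show ?thesis unfolding Alg_mul_def .
qed

lemma fpolar_radical: "w \<in> Formal \<Longrightarrow> (\<forall>c\<in>CK. pair c v = 0) \<Longrightarrow> fpolar w v = 0"
  by (induction w) auto

lemma fmul1_one: "w \<in> Formal \<Longrightarrow> fmul1 (1, \<one>\<^bsub>K\<^esub>) w = w"
  by (induction w) (auto simp: one_l)
lemma fmul_one: "v \<in> Formal \<Longrightarrow> fmul v [(1, \<one>\<^bsub>K\<^esub>)] = v"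
  by (induction v) (auto simp: one_r)

(* The case excluded by the second alternative of the theorem: characteristic \<noteq> 2, or
   a polar form f that does not vanish identically. *)
definition q_nondeg where "q_nondeg \<longleftrightarrow> (2::'l) \<noteq> 0 \<or> (\<exists>a\<in>CK. \<exists>b\<in>CK. f a b \<noteq> 0)"

context
  assumes nd: q_nondeg
begin

(* The radical of the pairing is totally isotropic for the formal quadratic form: directly
   if 2 \<noteq> 0, and in characteristic 2 by multiplying with elements a, b with f(a, b) \<noteq> 0. *)
lemma radical_fq:
  assumes v: "v \<in> Formal" and r: "\<forall>c\<in>CK. pair c v = 0"
  shows "fq v = 0"
proof (cases "(2::'l) = 0")
  case False
  have "fpolar v v = 0" using fpolar_radical v r by blast
  then show ?thesis using fpolar_self[OF v] False by simp
next
  case True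
  then obtain a b where ab: "a \<in> CK" "b \<in> CK" "f a b \<noteq> 0" using nd unfolding q_nondeg_def by blast
  have ra: "\<forall>c\<in>CK. pair c (fmul1 (1, a) v) = 0" using r v ab by (simp add: pair_fmul1 mC)
  have "fpolar (fmul1 (1, b) v) (fmul1 (1, a) v) = 0" using fpolar_radical ra ab v by simp
  then have "f b a * fq v = 0" using fpolar_fmul1_fmul1[of b a v 1 1] ab v by simp
  then show ?thesis using ab f_sym by simp
qed

lemma fq_cong:
  assumes v: "v \<in> Formal" and w: "w \<in> Formal" and e: "ev v = ev w"
  shows "fq v = fq w"
proof -
  define r where "r = w @ fscale (-1) v"
  have rV: "r \<in> Formal" unfolding r_def using v w by simp
  have rr: "\<forall>c\<in>CK. pair c r = 0" unfolding r_def using e unfolding ev_eq by simp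
  have "fq (v @ r) = fq v" using fq_append[OF v rV] radical_fq[OF rV rr] fpolar_radical[OF v rr]
    by simp
  moreover have "fq (v @ r) = fq w"
    unfolding r_def using v w
    by (simp add: fq_append fpolar_self fpolar_sym[of w v] algebra_simps power2_eq_square)
  ultimately show ?thesis by simp
qed

lemma Alg_N_ev: "v \<in> Formal \<Longrightarrow> Alg_N (ev v) = fq v"
  unfolding Alg_N_def using rep[OF AlgI] fq_cong by blast

lemma Alg_polar_ev:
  "v \<in> Formal \<Longrightarrow> w \<in> Formal \<Longrightarrow> Alg_N (ev v + ev w) - Alg_N (ev v) - Alg_N (ev w) = fpolar v w"
  using Alg_N_ev[of "v @ w"] Alg_N_ev[of v] Alg_N_ev[of w] ev_app[of v w] fq_append[of v w] by simp

lemma Alg_nondeg: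
  assumes x: "x \<in> Alg" and h: "\<forall>y\<in>Alg. Alg_N (x + y) - Alg_N x - Alg_N y = 0"
  shows "x = 0"
proof -
  obtain v where v: "v \<in> Formal" "x = ev v" using x by (metis AlgE)
  have "pair c v = 0" if c: "c \<in> CK" for c
  proof -
    have "Alg_N (x + ev [(1, c)]) - Alg_N x - Alg_N (ev [(1, c)]) = 0"
      using h AlgI[of "[(1, c)]"] c by simp
    then show ?thesis using Alg_polar_ev[OF v(1), of "[(1, c)]"] v c by (simp add: fpolar_Cons2)
  qed
  then show "x = 0" using v ev_zero by simp
qed

lemma Alg_comp_alg: "comp_alg Alg Alg_scale Alg_mul Alg_one Alg_N"
proof (unfold_locales)
  show "0 \<in> Alg" using AlgI[of "[]"] ev_nil by simp
  show "Alg_one \<in> Alg" unfolding Alg_one_def using AlgI oneC by simp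
  show "Alg_N Alg_one = 1" unfolding Alg_one_def using Alg_N_ev[of "[(1, \<one>\<^bsub>K\<^esub>)]"] oneC q_one
    by simp
  show "\<And>x. x \<in> Alg \<Longrightarrow> \<forall>y\<in>Alg. Alg_N (x + y) - Alg_N x - Alg_N y = 0 \<Longrightarrow> x = 0"
    by (rule Alg_nondeg)
next
  fix x assume "x \<in> Alg"
  then obtain v where v: "v \<in> Formal" "x = ev v" by (metis AlgE)
  show "Alg_scale c x \<in> Alg" for c using AlgI[of "fscale c v"] v ev_fscale by simp
  show "Alg_mul Alg_one x = x" unfolding Alg_one_def using v Alg_mul_ev[of "[(1, \<one>\<^bsub>K\<^esub>)]" v] oneC
    by (simp add: fmul1_one)
  show "Alg_mul x Alg_one = x" unfolding Alg_one_def using v Alg_mul_ev[of v "[(1, \<one>\<^bsub>K\<^esub>)]"] oneC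
    by (simp add: fmul_one)
  show "Alg_N (Alg_scale c x) = c\<^sup>2 * Alg_N x" for c
    using v ev_fscale[symmetric, of c v] Alg_N_ev by simp
  fix y assume "y \<in> Alg"
  then obtain w where w: "w \<in> Formal" "y = ev w" by (metis AlgE)
  show "x + y \<in> Alg" using AlgI[of "v @ w"] v w ev_app by simp
  show "Alg_mul x y \<in> Alg" using AlgI[of "fmul v w"] v w Alg_mul_ev by simp
  show "Alg_N (Alg_mul x y) = Alg_N x * Alg_N y" using v w Alg_mul_ev Alg_N_ev fq_fmul by simp
  show "Alg_mul x (Alg_scale c y) = Alg_scale c (Alg_mul x y)" for c
    using v w Alg_mul_ev ev_fscale[symmetric] fmul_fscale2 by simp
  show "Alg_mul (Alg_scale c x) y = Alg_scale c (Alg_mul x y)" for c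
    using v w Alg_mul_ev ev_fscale[symmetric] fmul_fscale1 by simp
  show "Alg_N (Alg_scale c x + y) - Alg_N (Alg_scale c x) - Alg_N y
      = c * (Alg_N (x + y) - Alg_N x - Alg_N y)" for c
    using v w ev_fscale[symmetric, of c v] Alg_polar_ev by simp
  fix z assume "z \<in> Alg"
  then obtain u where u: "u \<in> Formal" "z = ev u" by (metis AlgE)
  show "Alg_mul (x + y) z = Alg_mul x z + Alg_mul y z"
    using u v w Alg_mul_ev ev_app[symmetric] by simp
  show "Alg_mul z (x + y) = Alg_mul z x + Alg_mul z y"
    using u v w Alg_mul_ev ev_app[symmetric] by (simp add: ev_eq pair_fmul_append2)
  show "Alg_N (x + y + z) - Alg_N (x + y) - Alg_N z
      = Alg_N (x + z) - Alg_N x - Alg_N z + (Alg_N (y + z) - Alg_N y - Alg_N z)"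
    using u v w Alg_polar_ev[of "v @ w" u] Alg_polar_ev[of v u] Alg_polar_ev[of w u]
      ev_app[symmetric] by simp
qed (auto simp: Alg_scale_def fun_eq_iff algebra_simps)

lemma factors_through_composition_algebra:
  "\<exists>(M :: ('l, nat \<Rightarrow> 'l) module) N \<phi>.
     composition_algebra M N \<and> \<phi> \<in> ring_hom K M \<and> (\<forall>a\<in>CK. q a = N (\<phi> a))"
proof -
  interpret A: comp_alg Alg Alg_scale Alg_mul Alg_one Alg_N by (rule Alg_comp_alg)
  obtain M :: "('l, nat \<Rightarrow> 'l) module" and N' enc where
    CA: "composition_algebra M N'" and
    enc: "\<forall>x\<in>Alg. enc x \<in> carrier M \<and> N' (enc x) = Alg_N x" and
    hom: "\<forall>x\<in>Alg. \<forall>y\<in>Alg. enc x \<otimes>\<^bsub>M\<^esub> enc y = enc (Alg_mul x y) \<and> enc x \<oplus>\<^bsub>M\<^esub> enc y = enc (x + y)"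
      and one: "\<one>\<^bsub>M\<^esub> = enc Alg_one"
    using A.nat_coded_composition_algebra by blast
  define \<phi> where "\<phi> a = enc (ev [(1, a)])" for a
  have inA: "ev [(1, a)] \<in> Alg" if "a \<in> CK" for a using AlgI that by simp
  have ev_add: "ev [(1, a \<oplus>\<^bsub>K\<^esub> b)] = ev [(1, a)] + ev [(1, b)]" if "a \<in> CK" "b \<in> CK" for a b
    using that unfolding ev_def by (auto simp: fun_eq_iff f_add2)
  have "\<phi> \<in> ring_hom K M"
  proof (rule ring_hom_memI)
    fix x y assume x: "x \<in> CK" and y: "y \<in> CK"
    show "\<phi> x \<in> carrier M" unfolding \<phi>_def using enc inA x by blast
    show "\<phi> (x \<otimes>\<^bsub>K\<^esub> y) = \<phi> x \<otimes>\<^bsub>M\<^esub> \<phi> y"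
      unfolding \<phi>_def using hom inA x y Alg_mul_ev[of "[(1, x)]" "[(1, y)]"] by simp
    show "\<phi> (x \<oplus>\<^bsub>K\<^esub> y) = \<phi> x \<oplus>\<^bsub>M\<^esub> \<phi> y"
      unfolding \<phi>_def using hom inA x y ev_add by simp
  qed (simp add: \<phi>_def one Alg_one_def)
  moreover have "q a = N' (\<phi> a)" if a: "a \<in> CK" for a
    unfolding \<phi>_def using enc inA[OF a] Alg_N_ev[of "[(1, a)]"] a by simp
  ultimately show ?thesis using CA by blast
qed

end

lemma degenerate_ring_hom:
  assumes "\<not> q_nondeg" shows "CHAR('l) = 2 \<and> ring_hom_to_field K q"
proof
  have two: "of_nat 2 = (0::'l)" and f0: "\<And>a b. a \<in> CK \<Longrightarrow> b \<in> CK \<Longrightarrow> f a b = 0"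
    using assms unfolding q_nondeg_def by auto
  then have "CHAR('l) dvd 2" by (simp only: of_nat_eq_0_iff_char_dvd)
  moreover have "CHAR('l) \<noteq> 1" using CHAR_not_1 by simp
  ultimately show "CHAR('l) = 2"
    using dvd_imp_le[of "CHAR('l)" 2] by (cases "CHAR('l)") (auto simp: less_Suc_eq_le le_Suc_eq)
  have "q (x \<oplus>\<^bsub>K\<^esub> y) = q x + q y" if "x \<in> CK" "y \<in> CK" for x y
    using f0[OF that] unfolding f_def by (simp add: algebra_simps)
  then show "ring_hom_to_field K q" unfolding ring_hom_to_field_def using q_mul q_one by simp
qed

end

theorem theorem1p2:
  fixes K :: "('k, 'b) ring_scheme" and q :: "'k \<Rightarrow> 'l::field"
  assumes "nonassoc_ring_1 K"
    and "mult_quadratic_map K q"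
  shows "(\<exists>(M :: ('l, nat \<Rightarrow> 'l) module) N \<phi>.
            composition_algebra M N \<and> \<phi> \<in> ring_hom K M \<and>
            (\<forall>a\<in>carrier K. q a = N (\<phi> a)))
         \<or> (CHAR('l) = 2 \<and> ring_hom_to_field K q)"
proof -
  interpret mq_map K q using assms by (rule mq_map.intro)
  show ?thesis
    using factors_through_composition_algebra degenerate_ring_hom by blast
qed

end
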